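(* Let $d,n\ge1$, $t=d+n$, $u=\binom{n+2}{2}$, $p=u(d+1)-1$, let ${\mathbb X}\subseteq{\mathbb P}^2$ be a set of $\binom{d+1}{2}$ points in generic position, and let ${\bf L}=(L_{lj})$, $F_1,\dots,F_{d+1}$, $\lambda_{ljk}$ and the matrix ${\bf E}$ be as in the context. Let $\overline{\Lambda_t}\subseteq{\mathbb P}^p$ be the closure of the image of the rational map $\varphi:{\mathbb P}^2 - - \rightarrow{\mathbb P}^p$, $\varphi([w_1:w_2:w_3])=[x_{ij}]$ with $x_{ij}=z_iF_j$. Let ${\bf V}\subseteq{\mathbb P}^p$ be the zero set of the following equations in the coordinates $x_{ij}$: (1) the $\binom{n+1}{2}d$ linear equations $\sum_{(\alpha,j)}{\bf E}_{(\beta,l),(\alpha,j)}x_{i(\alpha)j}=0$, one for each row $(\beta,l)$ of ${\bf E}$, where $i(\alpha)$ is the index with $z_{i(\alpha)}=w^\alpha$; (2) all $2\times2$ minors of the $u\times(d+1)$ matrix $(x_{ij})$; (3) for each $j=1,\dots,d+1$, all $2\times2$ minors of the $3\times\binom{n+1}{2}$ catalecticant matrix whose entry in row $k\in\{1,2,3\}$ and column $w^\beta$ ($|\beta|=n-1$) is $x_{i(\gamma)j}$ where $w^\gamma=w_kw^\beta$. Then ${\bf V}=\overline{\Lambda_t}$ as sets.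
   Context: $\mathfrak{k}$ is algebraically closed of characteristic $0$; $w^\alpha=w_1^{\alpha_1}w_2^{\alpha_2}w_3^{\alpha_3}$, $|\alpha|=\sum\alpha_i$. $z_1=w_1^n,z_2=w_1^{n-1}w_2,\dots,z_u=w_3^n$ are the degree-$n$ monomials in lexicographic order ($w_1>w_2>w_3$). "Generic position" means $\dim_{\mathfrak{k}}(\mathfrak{k}[w_1,w_2,w_3]/I_{\mathbb X})_s=\min\{\binom{s+2}{2},|{\mathbb X}|\}$ for all $s$; then the homogeneous ideal $I_{\mathbb X}$ is generated by $F_j=(-1)^{j+1}\det({\bf L}\setminus j\text{-th column})$, $j=1,\dots,d+1$, for a $d\times(d+1)$ matrix ${\bf L}=(L_{lj})$ of linear forms; write $L_{lj}=\sum_{k=1}^3\lambda_{ljk}w_k$. ${\bf E}$ is the matrix with rows indexed by $(\beta,l)$, $|\beta|=n-1$, $1\le l\le d$, columns indexed by $(\alpha,j)$, $|\alpha|=n$, $1\le j\le d+1$, and entry $\lambda_{ljk}$ if $w^\alpha=w^\beta w_k$ for some $k$, $0$ otherwise (so the linear equations (1) encode the relations $\sum_j L_{lj}w^\beta F_j=0$). $\overline{\Lambda_t}$ is the embedding of the blowup of ${\mathbb P}^2$ at ${\mathbb X}$ by the linear system of degree-$t$ forms in $I_{\mathbb X}$. *)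

theory Defs
  imports "Jordan_Normal_Form.Determinant" "HOL-Library.Function_Algebras"
    "HOL-Library.Product_Lexorder" "HOL-Computational_Algebra.Polynomial"
begin

type_synonym mexp = "nat \<times> nat \<times> nat"   \<comment> \<open>exponent vector (a1,a2,a3) of w1^a1 w2^a2 w3^a3\<close>
type_synonym 'k pt3 = "'k \<times> 'k \<times> 'k"

definition alg_closed :: "'k::field itself \<Rightarrow> bool" where
  "alg_closed _ \<longleftrightarrow> (\<forall>q::'k poly. degree q \<ge> 1 \<longrightarrow> (\<exists>x. poly q x = 0))"

definition mdeg :: "mexp \<Rightarrow> nat" where
  "mdeg a = fst a + fst (snd a) + snd (snd a)"

definition mons_set :: "nat \<Rightarrow> mexp set" where
  "mons_set s = {a. mdeg a = s}"

text \<open>Degree-s monomials in lexicographic order w1 > w2 > w3 (first = w1^s).\<close>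
definition mons :: "nat \<Rightarrow> mexp list" where
  "mons s = rev (sorted_list_of_set (mons_set s))"

text \<open>index i(alpha) with z_(i(alpha)) = w^alpha (0-based)\<close>
definition midx :: "nat \<Rightarrow> mexp \<Rightarrow> nat" where
  "midx s a = (THE i. i < length (mons s) \<and> mons s ! i = a)"

text \<open>unit exponent vector of w_(k+1), k = 0,1,2\<close>
definition ek :: "nat \<Rightarrow> mexp" where
  "ek k = (if k = 0 then (1,0,0) else if k = 1 then (0,1,0) else (0,0,1))"

definition madd :: "mexp \<Rightarrow> mexp \<Rightarrow> mexp" where
  "madd a b = (fst a + fst b, fst (snd a) + fst (snd b), snd (snd a) + snd (snd b))"

definition coord :: "'k pt3 \<Rightarrow> nat \<Rightarrow> 'k" where
  "coord w k = (if k = 0 then fst w else if k = 1 then fst (snd w) else snd (snd w))"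

definition mon3 :: "mexp \<Rightarrow> 'k::comm_semiring_1 pt3 \<Rightarrow> 'k" where
  "mon3 a w = fst w ^ fst a * fst (snd w) ^ fst (snd a) * snd (snd w) ^ snd (snd a)"

definition hom_form3 :: "nat \<Rightarrow> ('k::comm_semiring_1 pt3 \<Rightarrow> 'k) \<Rightarrow> bool" where
  "hom_form3 s G \<longleftrightarrow> (\<exists>c. \<forall>w. G w = (\<Sum>a\<in>mons_set s. c a * mon3 a w))"

definition poly_fun3 :: "('k::comm_semiring_1 pt3 \<Rightarrow> 'k) \<Rightarrow> bool" where
  "poly_fun3 G \<longleftrightarrow> (\<exists>N c. \<forall>w. G w = (\<Sum>a\<in>{a. mdeg a \<le> N}. c a * mon3 a w))"

text \<open>X is a finite set of points of P^2, given by nonzero pairwise non-proportional representatives.\<close>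
definition proj_point_set :: "'k::field pt3 set \<Rightarrow> bool" where
  "proj_point_set X \<longleftrightarrow> finite X \<and> (0,0,0) \<notin> X \<and>
     (\<forall>x\<in>X. \<forall>y\<in>X. x \<noteq> y \<longrightarrow> \<not> (\<exists>c. y = (c * fst x, c * fst (snd x), c * snd (snd x))))"

text \<open>dim_k (k[w]/I_X)_s = dimension of the space of values of degree-s forms on X
  (image of the evaluation map, whose kernel is (I_X)_s)\<close>
definition hilb :: "'k::field pt3 set \<Rightarrow> nat \<Rightarrow> nat" where
  "hilb X s = vector_space.dim (\<lambda>(c::'k) f x. c * f x)
      ((\<lambda>a. \<lambda>x. if x \<in> X then mon3 a x else 0) ` mons_set s)"

definition generic_position :: "'k::field pt3 set \<Rightarrow> bool" where
  "generic_position X \<longleftrightarrow> (\<forall>s. hilb X s = min ((s + 2) choose 2) (card X))"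

text \<open>L_(lj) = sum_k lambda l j k * w_k  (0-based l < d, j \<le> d, k < 3)\<close>
definition Lform :: "(nat \<Rightarrow> nat \<Rightarrow> nat \<Rightarrow> 'k) \<Rightarrow> nat \<Rightarrow> nat \<Rightarrow> 'k::comm_ring_1 pt3 \<Rightarrow> 'k" where
  "Lform lam l j w = (\<Sum>k<3. lam l j k * coord w k)"

text \<open>F_j = (-1)^(j+1) det(L without j-th column), written 0-based (j = 0..d)\<close>
definition Fform :: "nat \<Rightarrow> (nat \<Rightarrow> nat \<Rightarrow> nat \<Rightarrow> 'k) \<Rightarrow> nat \<Rightarrow> 'k::comm_ring_1 pt3 \<Rightarrow> 'k" where
  "Fform d lam j w = (-1) ^ j *
     det (mat d d (\<lambda>(l, c). Lform lam l (if c < j then c else Suc c) w))"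

text \<open>homogeneous ideal I_X generated by F_1..F_(d+1): homogeneous parts agree\<close>
definition ideal_generated_by :: "'k::field pt3 set \<Rightarrow> nat \<Rightarrow> (nat \<Rightarrow> 'k pt3 \<Rightarrow> 'k) \<Rightarrow> bool" where
  "ideal_generated_by X m F \<longleftrightarrow> (\<forall>s G. hom_form3 s G \<longrightarrow>
     ((\<forall>x\<in>X. G x = 0) \<longleftrightarrow>
      (\<exists>A. (\<forall>j<m. poly_fun3 (A j)) \<and> (\<forall>w. G w = (\<Sum>j<m. A j w * F j w)))))"

definition Ementry :: "(nat \<Rightarrow> nat \<Rightarrow> nat \<Rightarrow> 'k::zero) \<Rightarrow> mexp \<times> nat \<Rightarrow> mexp \<times> nat \<Rightarrow> 'k" where
  "Ementry lam r c = (case r of (b, l) \<Rightarrow> case c of (a, j) \<Rightarrow>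
     (if \<exists>k<3. a = madd b (ek k) then lam l j (THE k. k < 3 \<and> a = madd b (ek k)) else 0))"

text \<open>Coordinates of P^p: x (i,j), i < u, j \<le> d (0-based).  Points of P^p are represented by
  nonzero vectors supported on the index set.\<close>
definition cidx :: "nat \<Rightarrow> nat \<Rightarrow> (nat \<times> nat) set" where
  "cidx u d = {..<u} \<times> {..d}"

definition proj_reps :: "(nat \<times> nat) set \<Rightarrow> ((nat \<times> nat) \<Rightarrow> 'k::zero) set" where
  "proj_reps C = {x. (\<forall>c. c \<notin> C \<longrightarrow> x c = 0) \<and> (\<exists>c\<in>C. x c \<noteq> 0)}"

definition expo :: "'i set \<Rightarrow> nat \<Rightarrow> ('i \<Rightarrow> nat) set" where
  "expo C s = {m. (\<forall>c. c \<notin> C \<longrightarrow> m c = 0) \<and> (\<Sum>c\<in>C. m c) = s}"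

definition hom_poly :: "'i set \<Rightarrow> nat \<Rightarrow> (('i \<Rightarrow> 'k::comm_semiring_1) \<Rightarrow> 'k) \<Rightarrow> bool" where
  "hom_poly C s G \<longleftrightarrow> (\<exists>c. \<forall>x. G x = (\<Sum>m\<in>expo C s. c m * (\<Prod>i\<in>C. x i ^ m i)))"

text \<open>Zariski closure in projective space of a set S of representatives\<close>
definition proj_closure :: "'i set \<Rightarrow> ('i \<Rightarrow> 'k::comm_semiring_1) set \<Rightarrow> ('i \<Rightarrow> 'k) set \<Rightarrow> ('i \<Rightarrow> 'k) set" where
  "proj_closure C P S = {x \<in> P. \<forall>s G. hom_poly C s G \<longrightarrow> (\<forall>y\<in>S. G y = 0) \<longrightarrow> G x = 0}"

definition phi :: "nat \<Rightarrow> nat \<Rightarrow> (nat \<Rightarrow> 'k pt3 \<Rightarrow> 'k) \<Rightarrow> 'k::comm_semiring_1 pt3 \<Rightarrow> (nat \<times> nat \<Rightarrow> 'k)" where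
  "phi n d F w = (\<lambda>(i, j). if i < length (mons n) \<and> j \<le> d then mon3 (mons n ! i) w * F j w else 0)"

text \<open>Image of the rational map on its domain of definition\<close>
definition phi_image :: "nat \<Rightarrow> nat \<Rightarrow> (nat \<Rightarrow> 'k pt3 \<Rightarrow> 'k) \<Rightarrow> (nat \<times> nat \<Rightarrow> 'k::comm_semiring_1) set" where
  "phi_image n d F = {phi n d F w | w. w \<noteq> (0,0,0) \<and> phi n d F w \<noteq> (\<lambda>_. 0)}"

definition Vset :: "nat \<Rightarrow> nat \<Rightarrow> (nat \<Rightarrow> nat \<Rightarrow> nat \<Rightarrow> 'k) \<Rightarrow> (nat \<times> nat \<Rightarrow> 'k::comm_ring_1) set" where
  "Vset n d lam = {x \<in> proj_reps (cidx (length (mons n)) d).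
     \<comment> \<open>(1) linear equations from the rows of E\<close>
     (\<forall>b\<in>mons_set (n - 1). \<forall>l<d.
        (\<Sum>i<length (mons n). \<Sum>j\<le>d. Ementry lam (b, l) (mons n ! i, j) * x (i, j)) = 0) \<and>
     \<comment> \<open>(2) 2x2 minors of (x_ij)\<close>
     (\<forall>i1<length (mons n). \<forall>i2<length (mons n). \<forall>j1\<le>d. \<forall>j2\<le>d.
        x (i1, j1) * x (i2, j2) - x (i1, j2) * x (i2, j1) = 0) \<and>
     \<comment> \<open>(3) 2x2 minors of the catalecticant matrices\<close>
     (\<forall>j\<le>d. \<forall>k1<3. \<forall>k2<3. \<forall>b1\<in>mons_set (n - 1). \<forall>b2\<in>mons_set (n - 1).
        x (midx n (madd b1 (ek k1)), j) * x (midx n (madd b2 (ek k2)), j)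
        - x (midx n (madd b2 (ek k1)), j) * x (midx n (madd b1 (ek k2)), j) = 0)}"

end

theory Submission
  imports Defs
begin

text \<open>
  By the $2 \times 2$ minors (2) a point $x$ of $V$ has rank one, and the catalecticant minors (3)
  make each column a Veronese point, so $x_{ij} = v^{\alpha_i} b_j$; the linear equations (1) then
  say $\mathbf{L}(v)\, b = 0$. If some $F_j(v) \neq 0$, the kernel of $\mathbf{L}(v)$ is spanned
  by $F(v)$ (Laplace expansion gives $\mathbf{L} F = 0$), so $x$ is a multiple of $\varphi(v)$.
  Otherwise $v$ is a base point; since the $F_j$ generate $I_{\mathbb X}$, the directional
  derivatives $D_u F(v)$ span a plane in $\ker \mathbf{L}(v)$, while a kernel of dimension $3$
  would make them all vanish. Hence $b = D_u F(v)$ for some $u$, and $x$ is the limit of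
  $\varphi(v + e u)/e$ as $e \to 0$. Conversely every equation of $V$ is a form vanishing on the
  image of $\varphi$.
\<close>

subsection \<open>Monomials\<close>

lemma finite_mons_set [simp]: "finite (mons_set s)"
  by (rule finite_subset[of _ "{..s} \<times> {..s} \<times> {..s}"]) (auto simp: mons_set_def mdeg_def)

lemma set_mons [simp]: "set (mons s) = mons_set s"
  by (simp add: mons_def)

lemma distinct_mons [simp]: "distinct (mons s)"
  by (simp add: mons_def)

lemma nth_mons_in_mons_set: "i < length (mons s) \<Longrightarrow> mons s ! i \<in> mons_set s"
  using nth_mem set_mons by metis

lemma midx_nth_mons: "i < length (mons s) \<Longrightarrow> midx s (mons s ! i) = i"
  unfolding midx_def by (rule the_equality) (auto simp: nth_eq_iff_index_eq)

lemma
  assumes "a \<in> mons_set s"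
  shows midx_less_length: "midx s a < length (mons s)"
    and nth_mons_midx: "mons s ! midx s a = a"
proof -
  obtain i where "i < length (mons s)" "mons s ! i = a"
    using assms by (metis in_set_conv_nth set_mons)
  then show "midx s a < length (mons s)" "mons s ! midx s a = a"
    using midx_nth_mons by auto
qed

lemma sum_mons: "(\<Sum>i<length (mons s). f (mons s ! i)) = (\<Sum>a\<in>mons_set s. f a)"
proof -
  have "(\<Sum>i<length (mons s). f (mons s ! i)) = sum_list (map f (mons s))"
    by (simp add: sum_list_sum_nth atLeast0LessThan)
  also have "\<dots> = sum f (set (mons s))"
    by (simp add: sum_list_distinct_conv_sum_set)
  finally show ?thesis by simp
qed

lemma card_pairs_sum_le: "card {(a::nat, b::nat). a + b \<le> n} = (n + 2) choose 2"
proof (induction n)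
  case 0
  have "{(a::nat, b::nat). a + b \<le> 0} = {(0, 0)}" by auto
  then show ?case by (simp add: choose_two)
next
  case (Suc n)
  have fin: "finite {(a::nat, b::nat). a + b \<le> n}"
    by (rule finite_subset[of _ "{..n} \<times> {..n}"]) auto
  have split: "{(a::nat, b::nat). a + b \<le> Suc n}
      = {(a, b). a + b \<le> n} \<union> (\<lambda>a. (a, Suc n - a)) ` {..Suc n}"
    by auto
  have disj: "{(a::nat, b::nat). a + b \<le> n} \<inter> (\<lambda>a. (a, Suc n - a)) ` {..Suc n} = {}"
    by auto
  have inj: "inj_on (\<lambda>a. (a, Suc n - a)) {..Suc n}"
    by (auto simp: inj_on_def)
  have "card {(a::nat, b::nat). a + b \<le> Suc n} = ((n + 2) choose 2) + (n + 2)"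
    unfolding split using card_Un_disjoint[OF fin finite_imageI disj] card_image[OF inj] Suc by simp
  also have "\<dots> = (Suc n + 2) choose 2"
    by (simp add: numeral_2_eq_2 choose_two)
  finally show ?case .
qed

lemma length_mons: "length (mons s) = (s + 2) choose 2"
proof -
  have "length (mons s) = card (mons_set s)"
    using distinct_card[OF distinct_mons] by simp
  also have "mons_set s = (\<lambda>(a, b). (a, b, s - a - b)) ` {(a, b). a + b \<le> s}"
    by (auto simp: mons_set_def mdeg_def image_iff)
  also have "card \<dots> = card {(a::nat, b::nat). a + b \<le> s}"
    by (rule card_image) (auto simp: inj_on_def)
  finally show ?thesis
    using card_pairs_sum_le by simp
qed

lemma mon3_madd: "mon3 (madd a b) w = mon3 a w * mon3 b w"
  by (simp add: mon3_def madd_def power_add algebra_simps)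

lemma mon3_ek: "mon3 (ek k) w = coord w k"
  by (simp add: mon3_def ek_def coord_def)

lemma mdeg_madd: "mdeg (madd a b) = mdeg a + mdeg b"
  by (simp add: mdeg_def madd_def)

lemma mdeg_ek: "mdeg (ek k) = 1"
  by (simp add: mdeg_def ek_def)

lemma madd_ek_in_mons_set: "b \<in> mons_set (n - 1) \<Longrightarrow> n \<ge> 1 \<Longrightarrow> madd b (ek k) \<in> mons_set n"
  by (simp add: mons_set_def mdeg_madd mdeg_ek)

lemma madd_ek_cancel: "k1 < 3 \<Longrightarrow> k2 < 3 \<Longrightarrow> madd b (ek k1) = madd b (ek k2) \<longleftrightarrow> k1 = k2"
  by (auto simp: madd_def ek_def split: if_splits)

lemma coord_madd: "coord (madd a b) k = coord a k + coord b k"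
  by (simp add: coord_def madd_def)

lemma coord_ek: "k < 3 \<Longrightarrow> m < 3 \<Longrightarrow> coord (ek k) m = (if m = k then 1 else 0)"
  by (auto simp: coord_def ek_def)

lemma mdeg_eq_sum_coord: "mdeg a = coord a 0 + coord a 1 + coord a 2"
  by (simp add: mdeg_def coord_def)

lemma coord_le_mdeg: "k < 3 \<Longrightarrow> coord a k \<le> mdeg a"
  by (auto simp: coord_def mdeg_def)

lemma madd_ek_decomp:
  assumes "k < 3" "coord a k > 0"
  shows "\<exists>b. mdeg b = mdeg a - 1 \<and> a = madd b (ek k)"
proof -
  obtain x y z where a: "a = (x, y, z)" by (cases a)
  consider "k = 0" | "k = 1" | "k = 2" using assms(1) by linarith
  then show ?thesis
  proof cases
    case 1
    then show ?thesis using assms(2)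
      by (intro exI[of _ "(x - 1, y, z)"]) (auto simp: a coord_def mdeg_def madd_def ek_def)
  next
    case 2
    then show ?thesis using assms(2)
      by (intro exI[of _ "(x, y - 1, z)"]) (auto simp: a coord_def mdeg_def madd_def ek_def)
  next
    case 3
    then show ?thesis using assms(2)
      by (intro exI[of _ "(x, y, z - 1)"]) (auto simp: a coord_def mdeg_def madd_def ek_def)
  qed
qed

lemma mons_set_decomp_off:
  assumes "a \<in> mons_set n" "k0 < 3" "coord a k0 < n"
  shows "\<exists>k<3. k \<noteq> k0 \<and> (\<exists>b\<in>mons_set (n - 1). a = madd b (ek k))"
proof -
  have "\<exists>k<3. k \<noteq> k0 \<and> coord a k > 0"
  proof (rule ccontr)
    assume "\<not> ?thesis"
    then have zero: "k \<noteq> k0 \<Longrightarrow> coord a k = 0" if "k < 3" for k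
      using that by auto
    consider "k0 = 0" | "k0 = 1" | "k0 = 2"
      using assms(2) by linarith
    then have "mdeg a = coord a k0"
      using zero[of 0] zero[of 1] zero[of 2] by cases (simp_all add: mdeg_eq_sum_coord)
    then show False
      using assms by (simp add: mons_set_def)
  qed
  then obtain k where k: "k < 3" "k \<noteq> k0" "coord a k > 0"
    by blast
  then obtain b where "mdeg b = mdeg a - 1" "a = madd b (ek k)"
    using madd_ek_decomp by blast
  then show ?thesis
    using assms(1) k by (intro exI[of _ k] conjI bexI[of _ b]) (simp_all add: mons_set_def)
qed

lemma mons_set_decomp:
  assumes "a \<in> mons_set n" "n \<ge> 1"
  shows "\<exists>k<3. \<exists>b\<in>mons_set (n - 1). a = madd b (ek k)"
proof (cases "coord a 0 < n")
  case True
  then show ?thesis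
    using mons_set_decomp_off[OF assms(1)] by (metis zero_less_numeral)
next
  case False
  then obtain b where "mdeg b = mdeg a - 1" "a = madd b (ek 0)"
    using assms(2) madd_ek_decomp[of 0 a] by auto
  then show ?thesis
    using assms(1) by (intro exI[of _ 0] conjI bexI[of _ b]) (simp_all add: mons_set_def)
qed

definition ek_pow :: "nat \<Rightarrow> nat \<Rightarrow> mexp" where
  "ek_pow m k = (if k = 0 then (m, 0, 0) else if k = 1 then (0, m, 0) else (0, 0, m))"

lemma ek_pow_in_mons_set: "ek_pow m k \<in> mons_set m"
  by (simp add: ek_pow_def mons_set_def mdeg_def)

lemma mon3_ek_pow: "k < 3 \<Longrightarrow> mon3 (ek_pow m k) v = coord v k ^ m"
  by (auto simp: ek_pow_def mon3_def coord_def)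

lemma eq_ek_pow_if_coord_eq_mdeg:
  assumes "k < 3" "coord a k = mdeg a"
  shows "a = ek_pow (mdeg a) k"
proof -
  obtain x y z where a: "a = (x, y, z)" by (cases a)
  consider "k = 0" | "k = 1" | "k = 2" using assms(1) by linarith
  then show ?thesis
    using assms(2) by cases (auto simp: a ek_pow_def coord_def mdeg_def)
qed

lemma veronese_from_ratios:
  fixes a :: "mexp \<Rightarrow> 'k::field"
  assumes n: "n \<ge> 1" and k0: "k0 < 3" and v: "coord v k0 \<noteq> 0"
    and ratios: "\<forall>b\<in>mons_set (n - 1). \<forall>k<3.
      a (madd b (ek k)) * coord v k0 = coord v k * a (madd b (ek k0))"
  shows "\<forall>g\<in>mons_set n. a g * coord v k0 ^ n = a (ek_pow n k0) * mon3 g v"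
proof -
  let ?\<rho> = "coord v k0"
  have "\<forall>g\<in>mons_set n. n - coord g k0 = m \<longrightarrow> a g * ?\<rho> ^ n = a (ek_pow n k0) * mon3 g v" for m
  proof (induction m)
    case 0
    show ?case
    proof (intro ballI impI)
      fix g assume g: "g \<in> mons_set n" "n - coord g k0 = 0"
      have "g = ek_pow n k0"
        using g coord_le_mdeg[OF k0, of g] eq_ek_pow_if_coord_eq_mdeg[OF k0, of g]
        by (simp add: mons_set_def)
      then show "a g * ?\<rho> ^ n = a (ek_pow n k0) * mon3 g v"
        using k0 by (simp add: mon3_ek_pow)
    qed
  next
    case (Suc m)
    show ?case
    proof (intro ballI impI)
      fix g assume g: "g \<in> mons_set n" "n - coord g k0 = Suc m"
      then obtain k b where k: "k < 3" "k \<noteq> k0" and b: "b \<in> mons_set (n - 1)"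
        and gb: "g = madd b (ek k)"
        using mons_set_decomp_off[OF g(1) k0] g(2) by (metis Zero_not_Suc diff_is_0_eq not_less)
      define g' where "g' = madd b (ek k0)"
      have "coord g' k0 = coord g k0 + 1"
        using k k0 by (simp add: g'_def gb coord_madd coord_ek)
      then have IH: "a g' * ?\<rho> ^ n = a (ek_pow n k0) * mon3 g' v"
        using Suc.IH madd_ek_in_mons_set[OF b n] g(2) by (simp add: g'_def)
      have "a g * ?\<rho> = coord v k * a g'"
        using ratios b k(1) by (simp add: gb g'_def)
      then have "a g * ?\<rho> ^ n * ?\<rho> = coord v k * (a g' * ?\<rho> ^ n)"
        by (simp add: algebra_simps)
      also have "\<dots> = coord v k * (a (ek_pow n k0) * mon3 g' v)"
        by (simp only: IH)
      also have "\<dots> = a (ek_pow n k0) * mon3 g v * ?\<rho>"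
        by (simp add: gb g'_def mon3_madd mon3_ek)
      finally have "a g * ?\<rho> ^ n * ?\<rho> = a (ek_pow n k0) * mon3 g v * ?\<rho>" .
      then show "a g * ?\<rho> ^ n = a (ek_pow n k0) * mon3 g v"
        using v by simp
    qed
  qed
  then show ?thesis by blast
qed

lemma veronese_if_catalecticant_minors:
  fixes a :: "mexp \<Rightarrow> 'k::field"
  assumes n: "n \<ge> 1"
    and minors: "\<forall>k1<3. \<forall>k2<3. \<forall>b1\<in>mons_set (n - 1). \<forall>b2\<in>mons_set (n - 1).
      a (madd b1 (ek k1)) * a (madd b2 (ek k2)) - a (madd b2 (ek k1)) * a (madd b1 (ek k2)) = 0"
    and a0: "g0 \<in> mons_set n" "a g0 \<noteq> 0"
  shows "\<exists>v c. v \<noteq> (0, 0, 0) \<and> (\<forall>g\<in>mons_set n. a g = c * mon3 g v)"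
proof -
  obtain k0 b0 where k0: "k0 < 3" and b0: "b0 \<in> mons_set (n - 1)" and g0: "g0 = madd b0 (ek k0)"
    using mons_set_decomp[OF a0(1) n] by blast
  define v where "v = (a (madd b0 (ek 0)), a (madd b0 (ek 1)), a (madd b0 (ek 2)))"
  have coord_v: "coord v k = a (madd b0 (ek k))" if "k < 3" for k
    using that by (auto simp: v_def coord_def ek_def)
  have v0: "coord v k0 \<noteq> 0"
    using a0(2) k0 by (simp add: coord_v g0)
  have "\<forall>b\<in>mons_set (n - 1). \<forall>k<3. a (madd b (ek k)) * coord v k0 = coord v k * a (madd b (ek k0))"
    using minors b0 k0 by (simp add: coord_v mult.commute)
  then have "\<forall>g\<in>mons_set n. a g = (a (ek_pow n k0) / coord v k0 ^ n) * mon3 g v"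
    using veronese_from_ratios[OF n k0 v0] v0 by (simp add: field_simps)
  moreover have "v \<noteq> (0, 0, 0)"
    using v0 by (auto simp: coord_def split: if_splits)
  ultimately show ?thesis by blast
qed


subsection \<open>Maximal minors of a $d \times (d + 1)$ matrix\<close>

definition skip_col :: "nat \<Rightarrow> nat \<Rightarrow> nat" where
  "skip_col j c = (if c < j then c else Suc c)"

definition maxminor :: "nat \<Rightarrow> (nat \<Rightarrow> nat \<Rightarrow> 'a::comm_ring_1) \<Rightarrow> nat \<Rightarrow> 'a" where
  "maxminor d M j = (-1) ^ j * det (mat d d (\<lambda>(l, c). M l (skip_col j c)))"

lemma skip_col_inj: "inj_on (skip_col j) A"
  by (auto simp: inj_on_def skip_col_def split: if_splits)

lemma skip_col_image:
  assumes "j \<le> d"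
  shows "skip_col j ` {0..<d} = {..d} - {j}"
proof
  show "skip_col j ` {0..<d} \<subseteq> {..d} - {j}"
    using assms by (auto simp: skip_col_def)
  show "{..d} - {j} \<subseteq> skip_col j ` {0..<d}"
  proof
    fix c assume "c \<in> {..d} - {j}"
    then have "c = skip_col j (if c < j then c else c - 1)" "(if c < j then c else c - 1) \<in> {0..<d}"
      using assms by (auto simp: skip_col_def)
    then show "c \<in> skip_col j ` {0..<d}"
      by blast
  qed
qed

lemma sum_skip_col:
  fixes f :: "nat \<Rightarrow> 'a::ab_group_add"
  assumes "j \<le> d"
  shows "(\<Sum>c = 0..<d. f (skip_col j c)) = (\<Sum>c\<le>d. f c) - f j"
proof -
  have "(\<Sum>c = 0..<d. f (skip_col j c)) = (\<Sum>c\<in>{..d} - {j}. f c)"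
    using sum.reindex[OF skip_col_inj, of f j "{0..<d}"] skip_col_image[OF assms] by simp
  also have "\<dots> = (\<Sum>c\<le>d. f c) - f j"
    using assms by (simp add: sum_diff1)
  finally show ?thesis .
qed

lemma det_mat_leibniz:
  "det (mat d d f) = (\<Sum>p | p permutes {0..<d}. signof p * (\<Prod>i = 0..<d. f (i, p i)))"
proof -
  have "(\<Prod>i = 0..<d. mat d d f $$ (i, p i)) = (\<Prod>i = 0..<d. f (i, p i))"
    if "p permutes {0..<d}" for p
    using permutes_in_image[OF that] by (intro prod.cong) auto
  then show ?thesis
    unfolding det_def by (auto intro: sum.cong)
qed

lemma maxminor_leibniz:
  "maxminor d M j = (-1) ^ j *
     (\<Sum>p | p permutes {0..<d}. signof p * (\<Prod>i = 0..<d. M i (skip_col j (p i))))"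
  by (simp add: maxminor_def det_mat_leibniz)

text \<open>Laplace expansion of the $(d + 1) \times (d + 1)$ matrix whose first row repeats row $l$.\<close>

lemma sum_mult_maxminor_eq_0:
  fixes M :: "nat \<Rightarrow> nat \<Rightarrow> 'a::comm_ring_1"
  assumes l: "l < d"
  shows "(\<Sum>c\<le>d. M l c * maxminor d M c) = 0"
proof -
  define N where "N = mat (Suc d) (Suc d) (\<lambda>(r, c). if r = 0 then M l c else M (r - 1) c)"
  have N: "N \<in> carrier_mat (Suc d) (Suc d)"
    by (simp add: N_def)
  have "row N 0 = row N (Suc l)"
    by (rule eq_vecI) (auto simp: N_def l)
  then have "det N = 0"
    by (intro det_identical_rows[OF N, of 0 "Suc l"]) (use l in auto)
  moreover have "det N = (\<Sum>c<Suc d. N $$ (0, c) * cofactor N 0 c)"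
    by (rule laplace_expansion_row[OF N]) simp
  moreover have "N $$ (0, c) * cofactor N 0 c = M l c * maxminor d M c" if "c < Suc d" for c
  proof -
    have "mat_delete N 0 c = mat d d (\<lambda>(i, c'). M i (skip_col c c'))"
      by (rule eq_matI) (auto simp: mat_delete_def N_def skip_col_def)
    then show ?thesis
      using that by (simp add: N_def cofactor_def maxminor_def)
  qed
  ultimately show ?thesis
    by (simp add: lessThan_Suc_atMost)
qed

lemma maxminor_eq_0_if_kernel:
  fixes M :: "nat \<Rightarrow> nat \<Rightarrow> 'a::idom"
  assumes ker: "\<forall>l<d. (\<Sum>c\<le>d. M l c * \<tau> c) = 0"
    and j: "j \<le> d" "\<tau> j = 0" and c0: "c0 \<le> d" "\<tau> c0 \<noteq> 0"
  shows "maxminor d M j = 0"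
proof -
  define A where "A = mat d d (\<lambda>(l, c). M l (skip_col j c))"
  define t where "t = vec d (\<lambda>c. \<tau> (skip_col j c))"
  have A: "A \<in> carrier_mat d d"
    by (simp add: A_def)
  have "A *\<^sub>v t = 0\<^sub>v d"
  proof (rule eq_vecI)
    fix l assume "l < dim_vec (0\<^sub>v d :: 'a vec)"
    then have l: "l < d" by simp
    have "(A *\<^sub>v t) $ l = (\<Sum>c = 0..<d. M l (skip_col j c) * \<tau> (skip_col j c))"
      using l by (simp add: A_def t_def mult_mat_vec_def scalar_prod_def)
    also have "\<dots> = 0"
      using sum_skip_col[OF j(1), of "\<lambda>c. M l c * \<tau> c"] ker l j(2) by simp
    finally show "(A *\<^sub>v t) $ l = 0\<^sub>v d $ l"
      using l by simp
  qed (simp add: A_def)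
  moreover have "t \<noteq> 0\<^sub>v d"
  proof -
    have "c0 \<in> skip_col j ` {0..<d}"
      using skip_col_image[OF j(1)] c0 j(2) by auto
    then obtain c where "c < d" "c0 = skip_col j c"
      by auto
    then have "t $ c \<noteq> 0"
      using c0(2) by (simp add: t_def)
    then show ?thesis
      using \<open>c < d\<close> by auto
  qed
  ultimately have "det A = 0"
    using det_0_iff_vec_prod_zero[OF A] by (metis t_def vec_carrier)
  then show ?thesis
    by (simp add: maxminor_def A_def)
qed

lemma kernel_eq_smult_maxminor:
  fixes M :: "nat \<Rightarrow> nat \<Rightarrow> 'k::field"
  assumes ker: "\<forall>l<d. (\<Sum>c\<le>d. M l c * b c) = 0"
    and j1: "j1 \<le> d" "maxminor d M j1 \<noteq> 0"
  shows "\<forall>j\<le>d. b j = (b j1 / maxminor d M j1) * maxminor d M j"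
proof -
  define \<kappa> where "\<kappa> = b j1 / maxminor d M j1"
  define \<tau> where "\<tau> c = b c - \<kappa> * maxminor d M c" for c
  have ker_\<tau>: "\<forall>l<d. (\<Sum>c\<le>d. M l c * \<tau> c) = 0"
  proof (intro allI impI)
    fix l assume l: "l < d"
    have "(\<Sum>c\<le>d. M l c * \<tau> c) = (\<Sum>c\<le>d. M l c * b c) - \<kappa> * (\<Sum>c\<le>d. M l c * maxminor d M c)"
      by (simp add: \<tau>_def algebra_simps sum_subtractf sum_distrib_left)
    then show "(\<Sum>c\<le>d. M l c * \<tau> c) = 0"
      using ker sum_mult_maxminor_eq_0[OF l, of M] l by simp
  qed
  have "\<tau> j1 = 0"
    using j1(2) by (simp add: \<tau>_def \<kappa>_def)
  then have "\<tau> c = 0" if "c \<le> d" for c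
    using maxminor_eq_0_if_kernel[OF ker_\<tau> j1(1) _ that] j1(2) by blast
  then show ?thesis
    by (simp add: \<tau>_def \<kappa>_def)
qed

lemma two_linear_eqs_nontrivial_solution:
  fixes r1 r2 r3 s1 s2 s3 :: "'k::field"
  obtains \<alpha> \<beta> \<gamma> where "\<alpha> \<noteq> 0 \<or> \<beta> \<noteq> 0 \<or> \<gamma> \<noteq> 0"
    and "r1 * \<alpha> + r2 * \<beta> + r3 * \<gamma> = 0" and "s1 * \<alpha> + s2 * \<beta> + s3 * \<gamma> = 0"
proof -
  define A :: "'k mat" where
    "A = mat 3 3 (\<lambda>(i, k). if i = 0 then [r1, r2, r3] ! k else if i = 1 then [s1, s2, s3] ! k else 0)"
  have A: "A \<in> carrier_mat 3 3"
    by (simp add: A_def)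
  have "det A = 0"
    using laplace_expansion_row[OF A, of 2] by (simp add: A_def)
  then obtain t where t: "t \<in> carrier_vec 3" "t \<noteq> 0\<^sub>v 3" "A *\<^sub>v t = 0\<^sub>v 3"
    using det_0_iff_vec_prod_zero[OF A] by blast
  have row: "(A *\<^sub>v t) $ i = (\<Sum>k<3. A $$ (i, k) * t $ k)" if "i < 3" for i
    using that t(1) by (simp add: mult_mat_vec_def scalar_prod_def atLeast0LessThan A_def)
  have "t $ 0 \<noteq> 0 \<or> t $ 1 \<noteq> 0 \<or> t $ 2 \<noteq> 0"
  proof (rule ccontr)
    assume "\<not> ?thesis"
    then have "t = 0\<^sub>v 3"
      using t(1) by (intro eq_vecI) (auto simp: less_Suc_eq numeral_3_eq_3 numeral_2_eq_2)
    then show False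
      using t(2) by simp
  qed
  moreover have "(A *\<^sub>v t) $ 0 = 0" "(A *\<^sub>v t) $ 1 = 0"
    using t(3) by simp_all
  then have "r1 * t $ 0 + r2 * t $ 1 + r3 * t $ 2 = 0" "s1 * t $ 0 + s2 * t $ 1 + s3 * t $ 2 = 0"
    using row[of 0] row[of 1]
    by (simp_all add: A_def numeral_3_eq_3 numeral_2_eq_2 lessThan_Suc algebra_simps)
  ultimately show ?thesis
    using that by blast
qed

definition pencil :: "(nat \<Rightarrow> nat \<Rightarrow> 'a::zero) \<Rightarrow> (nat \<Rightarrow> nat \<Rightarrow> 'a) \<Rightarrow> nat \<Rightarrow> nat \<Rightarrow> 'a poly" where
  "pencil M N l c = [:M l c, N l c:]"

text \<open>The derivative at $e = 0$ of the $j$-th maximal minor of $M + e N$.\<close>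

definition maxminor_deriv ::
    "nat \<Rightarrow> (nat \<Rightarrow> nat \<Rightarrow> 'a::comm_ring_1) \<Rightarrow> (nat \<Rightarrow> nat \<Rightarrow> 'a) \<Rightarrow> nat \<Rightarrow> 'a" where
  "maxminor_deriv d M N j = (\<Sum>i<d. maxminor d (M(i := N i)) j)"

lemma poly_maxminor: "poly (maxminor d P j) e = maxminor d (\<lambda>l c. poly (P l c) e) j"
  by (simp add: maxminor_leibniz poly_sum poly_prod)

lemma poly_maxminor_pencil:
  "poly (maxminor d (pencil M N) j) e = maxminor d (\<lambda>l c. M l c + e * N l c) j"
  by (simp add: poly_maxminor pencil_def)

lemma coeff_0_maxminor_pencil: "coeff (maxminor d (pencil M N) j) 0 = maxminor d M j"
  using poly_maxminor_pencil[of d M N j 0] by (simp add: poly_0_coeff_0)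

lemma coeff_mult_Suc_0:
  "coeff (p * q) (Suc 0) = coeff p 0 * coeff q (Suc 0) + coeff p (Suc 0) * coeff q 0"
  by (simp add: coeff_mult atMost_Suc algebra_simps)

lemma coeff_prod_linear_polys:
  fixes a b :: "'i \<Rightarrow> 'a::comm_ring_1"
  assumes "finite I"
  shows "coeff (\<Prod>i\<in>I. [:a i, b i:]) 0 = (\<Prod>i\<in>I. a i)"
    and "coeff (\<Prod>i\<in>I. [:a i, b i:]) (Suc 0) = (\<Sum>i\<in>I. b i * (\<Prod>i'\<in>I - {i}. a i'))"
proof -
  have "coeff (\<Prod>i\<in>I. [:a i, b i:]) 0 = (\<Prod>i\<in>I. a i) \<and>
    coeff (\<Prod>i\<in>I. [:a i, b i:]) (Suc 0) = (\<Sum>i\<in>I. b i * (\<Prod>i'\<in>I - {i}. a i'))"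
    using assms
  proof (induction I rule: finite_induct)
    case empty
    then show ?case by simp
  next
    case (insert x F)
    have "(\<Prod>i'\<in>insert x F - {i}. a i') = a x * (\<Prod>i'\<in>F - {i}. a i')" if "i \<in> F" for i
    proof -
      have "insert x F - {i} = insert x (F - {i})"
        using insert.hyps that by auto
      then show ?thesis
        using insert.hyps by simp
    qed
    then have "(\<Sum>i\<in>F. b i * (\<Prod>i'\<in>insert x F - {i}. a i'))
        = a x * (\<Sum>i\<in>F. b i * (\<Prod>i'\<in>F - {i}. a i'))"
      by (simp add: sum_distrib_left algebra_simps)
    moreover have "insert x F - {x} = F"
      using insert.hyps by auto
    ultimately show ?case
      using insert by (simp add: coeff_mult_Suc_0 algebra_simps)
  qed
  then show "coeff (\<Prod>i\<in>I. [:a i, b i:]) 0 = (\<Prod>i\<in>I. a i)"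
    "coeff (\<Prod>i\<in>I. [:a i, b i:]) (Suc 0) = (\<Sum>i\<in>I. b i * (\<Prod>i'\<in>I - {i}. a i'))"
    by auto
qed

lemma maxminor_fun_upd:
  assumes "i < d"
  shows "maxminor d (M(i := R)) j = (-1) ^ j * (\<Sum>p | p permutes {0..<d}. signof p *
      (R (skip_col j (p i)) * (\<Prod>i'\<in>{0..<d} - {i}. M i' (skip_col j (p i')))))"
proof -
  have "(\<Prod>i' = 0..<d. (M(i := R)) i' (skip_col j (p i')))
      = R (skip_col j (p i)) * (\<Prod>i'\<in>{0..<d} - {i}. M i' (skip_col j (p i')))" for p
  proof -
    have "(\<Prod>i' = 0..<d. (M(i := R)) i' (skip_col j (p i')))
        = R (skip_col j (p i)) * (\<Prod>i'\<in>{0..<d} - {i}. (M(i := R)) i' (skip_col j (p i')))"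
      using assms prod.remove[of "{0..<d}" i "\<lambda>i'. (M(i := R)) i' (skip_col j (p i'))"] by simp
    also have "(\<Prod>i'\<in>{0..<d} - {i}. (M(i := R)) i' (skip_col j (p i')))
        = (\<Prod>i'\<in>{0..<d} - {i}. M i' (skip_col j (p i')))"
      by (rule prod.cong) auto
    finally show ?thesis .
  qed
  then show ?thesis
    by (simp add: maxminor_leibniz)
qed

lemma coeff_neg_one_power_mult: "coeff ((-1) ^ j * q :: 'a::comm_ring_1 poly) n = (-1) ^ j * coeff q n"
proof -
  have "((-1) ^ j :: 'a poly) = [:(-1) ^ j:]"
    by (metis of_int_hom.hom_one of_int_minus of_int_poly of_int_power)
  then show ?thesis by simp
qed

lemma coeff_signof_mult: "coeff (signof p * q :: 'a::comm_ring_1 poly) n = signof p * coeff q n"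
  by (simp add: of_int_poly)

lemma coeff_Suc_0_maxminor_pencil:
  "coeff (maxminor d (pencil M N) j) (Suc 0) = maxminor_deriv d M N j"
proof -
  have "coeff (maxminor d (pencil M N) j) (Suc 0) = (-1) ^ j * (\<Sum>p | p permutes {0..<d}. signof p *
      (\<Sum>i = 0..<d. N i (skip_col j (p i)) * (\<Prod>i'\<in>{0..<d} - {i}. M i' (skip_col j (p i')))))"
    by (simp add: maxminor_leibniz pencil_def coeff_sum coeff_neg_one_power_mult coeff_signof_mult
        coeff_prod_linear_polys(2))
  also have "\<dots> = (\<Sum>i = 0..<d. (-1) ^ j * (\<Sum>p | p permutes {0..<d}. signof p *
      (N i (skip_col j (p i)) * (\<Prod>i'\<in>{0..<d} - {i}. M i' (skip_col j (p i'))))))"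
    unfolding sum_distrib_left by (rule sum.swap)
  also have "\<dots> = maxminor_deriv d M N j"
    by (simp add: maxminor_deriv_def maxminor_fun_upd atLeast0LessThan)
  finally show ?thesis .
qed

lemma maxminor_deriv_lincomb:
  "maxminor_deriv d M (\<lambda>l c. a * N1 l c + b * N2 l c) j
     = a * maxminor_deriv d M N1 j + b * maxminor_deriv d M N2 j"
  by (simp add: maxminor_deriv_def maxminor_fun_upd algebra_simps sum.distrib sum_distrib_left)

lemma sum_mult_maxminor_deriv_eq_0:
  fixes M N :: "nat \<Rightarrow> nat \<Rightarrow> 'a::comm_ring_1"
  assumes "\<forall>c\<le>d. maxminor d M c = 0" and "l < d"
  shows "(\<Sum>c\<le>d. M l c * maxminor_deriv d M N c) = 0"
proof -
  have "(\<Sum>c\<le>d. pencil M N l c * maxminor d (pencil M N) c) = 0"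
    by (rule sum_mult_maxminor_eq_0[OF assms(2)])
  then have "coeff (\<Sum>c\<le>d. pencil M N l c * maxminor d (pencil M N) c) (Suc 0) = 0"
    by simp
  then show ?thesis
    using assms(1)
    by (simp add: coeff_sum coeff_mult_Suc_0 pencil_def coeff_0_maxminor_pencil coeff_Suc_0_maxminor_pencil)
qed

text \<open>Each matrix obtained from $M$ by replacing one row still has a kernel vector in the span of
  $b, p, q$ that vanishes at position $j$.\<close>

lemma maxminor_deriv_eq_0_if_corank_3:
  fixes M N :: "nat \<Rightarrow> nat \<Rightarrow> 'k::field"
  assumes kb: "\<forall>l<d. (\<Sum>c\<le>d. M l c * b c) = 0"
    and kp: "\<forall>l<d. (\<Sum>c\<le>d. M l c * p c) = 0"
    and kq: "\<forall>l<d. (\<Sum>c\<le>d. M l c * q c) = 0"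
    and indep: "\<forall>\<alpha> \<beta> \<gamma>. (\<forall>c\<le>d. \<alpha> * b c + \<beta> * p c + \<gamma> * q c = 0) \<longrightarrow> \<alpha> = 0 \<and> \<beta> = 0 \<and> \<gamma> = 0"
    and j: "j \<le> d"
  shows "maxminor_deriv d M N j = 0"
proof -
  have "maxminor d (M(i := N i)) j = 0" if i: "i < d" for i
  proof -
    obtain \<alpha> \<beta> \<gamma> where nz: "\<alpha> \<noteq> 0 \<or> \<beta> \<noteq> 0 \<or> \<gamma> \<noteq> 0"
      and at_j: "b j * \<alpha> + p j * \<beta> + q j * \<gamma> = 0"
      and row_i: "(\<Sum>c\<le>d. N i c * b c) * \<alpha> + (\<Sum>c\<le>d. N i c * p c) * \<beta>
          + (\<Sum>c\<le>d. N i c * q c) * \<gamma> = 0"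
      by (rule two_linear_eqs_nontrivial_solution)
    define \<tau> where "\<tau> c = \<alpha> * b c + \<beta> * p c + \<gamma> * q c" for c
    have expand: "(\<Sum>c\<le>d. R c * \<tau> c)
        = (\<Sum>c\<le>d. R c * b c) * \<alpha> + (\<Sum>c\<le>d. R c * p c) * \<beta> + (\<Sum>c\<le>d. R c * q c) * \<gamma>" for R
      by (simp add: \<tau>_def algebra_simps sum.distrib sum_distrib_left sum_distrib_right)
    have "(\<Sum>c\<le>d. (M(i := N i)) l c * \<tau> c) = 0" if "l < d" for l
    proof (cases "l = i")
      case True
      then show ?thesis
        using row_i by (simp add: expand)
    next
      case False
      then show ?thesis
        using that kb kp kq by (simp add: expand)
    qed
    moreover have "\<tau> j = 0"
      using at_j by (simp add: \<tau>_def algebra_simps)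
    moreover obtain c0 where "c0 \<le> d" "\<tau> c0 \<noteq> 0"
      using indep nz unfolding \<tau>_def by blast
    ultimately show ?thesis
      using maxminor_eq_0_if_kernel j by blast
  qed
  then show ?thesis
    by (simp add: maxminor_deriv_def)
qed

subsection \<open>Points, lines and forms in the plane\<close>

definition lincomb3 :: "'k::comm_ring_1 \<Rightarrow> 'k pt3 \<Rightarrow> 'k \<Rightarrow> 'k pt3 \<Rightarrow> 'k pt3" where
  "lincomb3 a v b u = (a * fst v + b * fst u, a * fst (snd v) + b * fst (snd u),
     a * snd (snd v) + b * snd (snd u))"

definition dot :: "'k::comm_ring_1 pt3 \<Rightarrow> 'k pt3 \<Rightarrow> 'k" where
  "dot z w = fst z * fst w + fst (snd z) * fst (snd w) + snd (snd z) * snd (snd w)"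

lemma coord_lincomb3: "coord (lincomb3 a v b u) k = a * coord v k + b * coord u k"
  by (simp add: lincomb3_def coord_def)

lemma dot_lincomb3: "dot z (lincomb3 a v b u) = a * dot z v + b * dot z u"
  by (simp add: dot_def lincomb3_def algebra_simps)

lemma lincomb3_0_coeff [simp]: "lincomb3 1 v 0 u = v"
  by (simp add: lincomb3_def)

lemma lincomb3_0_point: "lincomb3 1 v e (0, 0, 0) = v"
  by (cases v) (simp add: lincomb3_def)

definition mon_line :: "mexp \<Rightarrow> 'k::comm_ring_1 pt3 \<Rightarrow> 'k pt3 \<Rightarrow> 'k poly" where
  "mon_line a v u = [:fst v, fst u:] ^ fst a * [:fst (snd v), fst (snd u):] ^ fst (snd a) *
     [:snd (snd v), snd (snd u):] ^ snd (snd a)"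

lemma poly_mon_line: "poly (mon_line a v u) e = mon3 a (lincomb3 1 v e u)"
  by (simp add: mon_line_def mon3_def lincomb3_def algebra_simps)

lemma poly_fun3_on_line:
  fixes A :: "'k::comm_ring_1 pt3 \<Rightarrow> 'k"
  assumes "poly_fun3 A"
  shows "\<exists>P. \<forall>e. A (lincomb3 1 v e u) = poly P e"
proof -
  obtain N c where A: "\<And>w. A w = (\<Sum>a\<in>{a. mdeg a \<le> N}. c a * mon3 a w)"
    using assms unfolding poly_fun3_def by blast
  show ?thesis
    by (intro exI[of _ "\<Sum>a\<in>{a. mdeg a \<le> N}. smult (c a) (mon_line a v u)"])
      (simp add: A poly_sum poly_mon_line)
qed

lemma hom_form3_poly_fun3:
  assumes "hom_form3 s G"
  shows "poly_fun3 G"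
proof -
  obtain c where c: "\<And>w. G w = (\<Sum>a\<in>mons_set s. c a * mon3 a w)"
    using assms unfolding hom_form3_def by blast
  have fin: "finite {a. mdeg a \<le> s}"
    by (rule finite_subset[of _ "{..s} \<times> {..s} \<times> {..s}"]) (auto simp: mdeg_def)
  have "G w = (\<Sum>a\<in>{a. mdeg a \<le> s}. (if mdeg a = s then c a else 0) * mon3 a w)" for w
  proof -
    have "(\<Sum>a\<in>{a. mdeg a \<le> s}. (if mdeg a = s then c a else 0) * mon3 a w)
        = (\<Sum>a\<in>mons_set s. (if mdeg a = s then c a else 0) * mon3 a w)"
      by (rule sum.mono_neutral_right) (auto simp: fin mons_set_def)
    then show ?thesis
      by (simp add: c mons_set_def)
  qed
  then show ?thesis
    unfolding poly_fun3_def by (intro exI[of _ s] exI[of _ "\<lambda>a. if mdeg a = s then c a else 0"]) blast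
qed

lemma hom_form3_mult:
  fixes G H :: "'k::comm_ring_1 pt3 \<Rightarrow> 'k"
  assumes "hom_form3 s G" "hom_form3 r H"
  shows "hom_form3 (s + r) (\<lambda>w. G w * H w)"
proof -
  obtain c where c: "\<forall>w. G w = (\<Sum>a\<in>mons_set s. c a * mon3 a w)"
    using assms(1) unfolding hom_form3_def by blast
  obtain c' where c': "\<forall>w. H w = (\<Sum>a\<in>mons_set r. c' a * mon3 a w)"
    using assms(2) unfolding hom_form3_def by blast
  define S where "S = mons_set s \<times> mons_set r"
  define C where "C y = (\<Sum>p\<in>{p \<in> S. madd (fst p) (snd p) = y}. c (fst p) * c' (snd p))" for y
  have S: "(\<lambda>p. madd (fst p) (snd p)) ` S \<subseteq> mons_set (s + r)"
    by (auto simp: S_def mons_set_def mdeg_madd)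
  have "G w * H w = (\<Sum>y\<in>mons_set (s + r). C y * mon3 y w)" for w
  proof -
    have "G w * H w = (\<Sum>p\<in>S. c (fst p) * c' (snd p) * mon3 (madd (fst p) (snd p)) w)"
      unfolding c[rule_format] c'[rule_format] S_def sum_product sum.cartesian_product
      by (intro sum.cong refl) (simp add: case_prod_beta mon3_madd algebra_simps)
    also have "\<dots> = (\<Sum>y\<in>mons_set (s + r). \<Sum>p\<in>{p \<in> S. madd (fst p) (snd p) = y}.
        c (fst p) * c' (snd p) * mon3 (madd (fst p) (snd p)) w)"
      by (rule sum.group[OF _ finite_mons_set S, symmetric]) (simp add: S_def)
    also have "\<dots> = (\<Sum>y\<in>mons_set (s + r). C y * mon3 y w)"
      unfolding C_def sum_distrib_right by (intro sum.cong refl) auto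
    finally show ?thesis .
  qed
  then show ?thesis
    unfolding hom_form3_def by blast
qed

lemma hom_form3_dot: "hom_form3 1 (dot z)"
proof -
  have "mons_set 1 = {(1, 0, 0), (0, 1, 0), (0, 0, 1)}"
    by (auto simp: mons_set_def mdeg_def)
  define c where "c a = coord z (if a = (1, 0, 0) then 0 else if a = (0, 1, 0) then 1 else 2)"
    for a :: mexp
  have "dot z w = (\<Sum>a\<in>mons_set 1. c a * mon3 a w)" for w
    unfolding \<open>mons_set 1 = _\<close> by (simp add: c_def dot_def mon3_def coord_def)
  then show ?thesis
    unfolding hom_form3_def by blast
qed

lemma hom_form3_prod_dot:
  assumes "finite I"
  shows "hom_form3 (card I) (\<lambda>w. \<Prod>i\<in>I. dot (z i) w)"
  using assms
proof (induction I rule: finite_induct)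
  case empty
  have "mons_set 0 = {(0, 0, 0)}"
    by (auto simp: mons_set_def mdeg_def)
  then show ?case
    by (auto simp: hom_form3_def mon3_def intro: exI[of _ "\<lambda>_. 1"])
next
  case (insert x F)
  then show ?case
    using hom_form3_mult[OF hom_form3_dot insert.IH, of "z x"] by simp
qed

lemma exists_dual_pair:
  fixes v :: "'k::field pt3"
  assumes "v \<noteq> (0, 0, 0)"
  shows "\<exists>z1 z2 u1 u2. dot z1 v = 0 \<and> dot z2 v = 0 \<and> dot z1 u1 = 1 \<and> dot z1 u2 = 0
     \<and> dot z2 u1 = 0 \<and> dot z2 u2 = 1"
proof -
  obtain v1 v2 v3 where v: "v = (v1, v2, v3)" by (cases v)
  have "v1 \<noteq> 0 \<or> v2 \<noteq> 0 \<or> v3 \<noteq> 0"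
    using assms v by auto
  moreover have ?thesis if "v1 \<noteq> 0"
    by (rule exI[of _ "(v2, -v1, 0)"], rule exI[of _ "(v3, 0, -v1)"],
        rule exI[of _ "(0, -1/v1, 0)"], rule exI[of _ "(0, 0, -1/v1)"])
      (use that in \<open>simp add: dot_def v field_simps\<close>)
  moreover have ?thesis if "v2 \<noteq> 0"
    by (rule exI[of _ "(-v2, v1, 0)"], rule exI[of _ "(0, v3, -v2)"],
        rule exI[of _ "(-1/v2, 0, 0)"], rule exI[of _ "(0, 0, -1/v2)"])
      (use that in \<open>simp add: dot_def v field_simps\<close>)
  moreover have ?thesis if "v3 \<noteq> 0"
    by (rule exI[of _ "(-v3, 0, v1)"], rule exI[of _ "(0, -v3, v2)"],
        rule exI[of _ "(-1/v3, 0, 0)"], rule exI[of _ "(0, -1/v3, 0)"])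
      (use that in \<open>simp add: dot_def v field_simps\<close>)
  ultimately show ?thesis
    by blast
qed

lemma exists_line_through_avoiding:
  fixes q v :: "'k::field pt3"
  assumes q: "q \<noteq> (0, 0, 0)" and nv: "\<nexists>c. v = (c * fst q, c * fst (snd q), c * snd (snd q))"
  shows "\<exists>z. dot z q = 0 \<and> dot z v \<noteq> 0"
proof -
  obtain q1 q2 q3 where qq: "q = (q1, q2, q3)" by (cases q)
  obtain v1 v2 v3 where vv: "v = (v1, v2, v3)" by (cases v)
  have "q2 * v3 - q3 * v2 \<noteq> 0 \<or> q3 * v1 - q1 * v3 \<noteq> 0 \<or> q1 * v2 - q2 * v1 \<noteq> 0"
  proof (rule ccontr)
    assume "\<not> ?thesis"
    then have e: "q2 * v3 = q3 * v2" "q3 * v1 = q1 * v3" "q1 * v2 = q2 * v1"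
      by auto
    have "q1 \<noteq> 0 \<or> q2 \<noteq> 0 \<or> q3 \<noteq> 0"
      using q qq by auto
    moreover have False if "q1 \<noteq> 0"
      using nv[unfolded qq vv] e that
      by (metis (no_types, lifting) fst_conv nonzero_mult_div_cancel_left snd_conv
          times_divide_eq_left mult.commute)
    moreover have False if "q2 \<noteq> 0"
      using nv[unfolded qq vv] e that
      by (metis (no_types, lifting) fst_conv nonzero_mult_div_cancel_left snd_conv
          times_divide_eq_left mult.commute)
    moreover have False if "q3 \<noteq> 0"
      using nv[unfolded qq vv] e that
      by (metis (no_types, lifting) fst_conv nonzero_mult_div_cancel_left snd_conv
          times_divide_eq_left mult.commute)
    ultimately show False
      by blast
  qed
  moreover have ?thesis if "q2 * v3 - q3 * v2 \<noteq> 0"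
    by (rule exI[of _ "(0, -q3, q2)"]) (use that in \<open>simp add: dot_def qq vv algebra_simps\<close>)
  moreover have ?thesis if "q3 * v1 - q1 * v3 \<noteq> 0"
    by (rule exI[of _ "(q3, 0, -q1)"]) (use that in \<open>simp add: dot_def qq vv algebra_simps\<close>)
  moreover have ?thesis if "q1 * v2 - q2 * v1 \<noteq> 0"
    by (rule exI[of _ "(-q2, q1, 0)"]) (use that in \<open>simp add: dot_def qq vv algebra_simps\<close>)
  ultimately show ?thesis
    by blast
qed

text \<open>A product of lines, one through each point of $X$ not on the line through $0$ and $v$.\<close>

lemma exists_form_vanishing_on_lines_through:
  fixes v :: "'k::field pt3"
  assumes X: "proj_point_set X" and v: "v \<noteq> (0, 0, 0)"
  shows "\<exists>r h. hom_form3 r h \<and> h v \<noteq> 0 \<and> (\<forall>x\<in>X. \<forall>z. dot z v = 0 \<longrightarrow> dot z x * h x = 0)"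
proof -
  define X' where "X' = {q\<in>X. \<nexists>c. v = (c * fst q, c * fst (snd q), c * snd (snd q))}"
  have fin: "finite X'"
    using X unfolding proj_point_set_def X'_def by auto
  have "\<forall>q\<in>X'. \<exists>z. dot z q = 0 \<and> dot z v \<noteq> 0"
  proof
    fix q assume "q \<in> X'"
    then have "q \<noteq> (0, 0, 0)" "\<nexists>c. v = (c * fst q, c * fst (snd q), c * snd (snd q))"
      using X unfolding X'_def proj_point_set_def by auto
    then show "\<exists>z. dot z q = 0 \<and> dot z v \<noteq> 0"
      by (rule exists_line_through_avoiding)
  qed
  then obtain zf where zf: "\<And>q. q \<in> X' \<Longrightarrow> dot (zf q) q = 0 \<and> dot (zf q) v \<noteq> 0"
    by metis
  define h where "h w = (\<Prod>q\<in>X'. dot (zf q) w)" for w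
  have "hom_form3 (card X') h"
    unfolding h_def by (rule hom_form3_prod_dot[OF fin])
  moreover have "h v \<noteq> 0"
    unfolding h_def using zf fin by (simp add: prod_zero_iff)
  moreover have "dot z x * h x = 0" if x: "x \<in> X" and zv: "dot z v = 0" for x z
  proof (cases "x \<in> X'")
    case True
    then have "dot (zf x) x = 0"
      using zf by blast
    then have "h x = 0"
      unfolding h_def using True fin by (auto simp: prod_zero_iff)
    then show ?thesis by simp
  next
    case False
    then obtain c where c: "v = (c * fst x, c * fst (snd x), c * snd (snd x))"
      using x unfolding X'_def by auto
    then have "dot z v = c * dot z x"
      by (simp add: dot_def algebra_simps)
    moreover have "c \<noteq> 0"
      using c v by auto
    ultimately show ?thesis
      using zv by simp
  qed
  ultimately show ?thesis
    by blast
qed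

subsection \<open>The maximal minors $F_j$ near a point\<close>

definition Lmat :: "(nat \<Rightarrow> nat \<Rightarrow> nat \<Rightarrow> 'k) \<Rightarrow> 'k::comm_ring_1 pt3 \<Rightarrow> nat \<Rightarrow> nat \<Rightarrow> 'k" where
  "Lmat lam w l c = Lform lam l c w"

definition Fline :: "nat \<Rightarrow> (nat \<Rightarrow> nat \<Rightarrow> nat \<Rightarrow> 'k) \<Rightarrow> 'k::comm_ring_1 pt3 \<Rightarrow> 'k pt3 \<Rightarrow> nat \<Rightarrow> 'k poly" where
  "Fline d lam v u j = maxminor d (pencil (Lmat lam v) (Lmat lam u)) j"

definition Fderiv :: "nat \<Rightarrow> (nat \<Rightarrow> nat \<Rightarrow> nat \<Rightarrow> 'k) \<Rightarrow> 'k::comm_ring_1 pt3 \<Rightarrow> 'k pt3 \<Rightarrow> nat \<Rightarrow> 'k" where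
  "Fderiv d lam v u j = maxminor_deriv d (Lmat lam v) (Lmat lam u) j"

lemma Fform_eq_maxminor: "Fform d lam j w = maxminor d (Lmat lam w) j"
  by (simp add: Fform_def maxminor_def skip_col_def Lmat_def)

lemma Lmat_lincomb3: "Lmat lam (lincomb3 a v b u) = (\<lambda>l c. a * Lmat lam v l c + b * Lmat lam u l c)"
  by (simp add: fun_eq_iff Lmat_def Lform_def coord_lincomb3 algebra_simps sum.distrib
      sum_distrib_left)

lemma poly_Fline: "poly (Fline d lam v u j) e = Fform d lam j (lincomb3 1 v e u)"
  by (simp add: Fline_def poly_maxminor_pencil Fform_eq_maxminor Lmat_lincomb3)

lemma coeff_0_Fline: "coeff (Fline d lam v u j) 0 = Fform d lam j v"
  by (simp add: Fline_def coeff_0_maxminor_pencil Fform_eq_maxminor)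

lemma coeff_Suc_0_Fline: "coeff (Fline d lam v u j) (Suc 0) = Fderiv d lam v u j"
  by (simp add: Fline_def Fderiv_def coeff_Suc_0_maxminor_pencil)

lemma Fderiv_lincomb3:
  "Fderiv d lam v (lincomb3 a u1 b u2) j = a * Fderiv d lam v u1 j + b * Fderiv d lam v u2 j"
  by (simp add: Fderiv_def Lmat_lincomb3 maxminor_deriv_lincomb)

lemma sum_Lform_mult_Fform_eq_0:
  "l < d \<Longrightarrow> (\<Sum>j\<le>d. Lform lam l j w * Fform d lam j w) = 0"
  using sum_mult_maxminor_eq_0[of l d "Lmat lam w"] by (simp add: Fform_eq_maxminor Lmat_def)

lemma sum_Lform_mult_Fderiv_eq_0:
  assumes "\<forall>j\<le>d. Fform d lam j v = 0" and "l < d"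
  shows "(\<Sum>j\<le>d. Lform lam l j v * Fderiv d lam v u j) = 0"
  using sum_mult_maxminor_deriv_eq_0[of d "Lmat lam v" l "Lmat lam u"] assms
  by (simp add: Fform_eq_maxminor Fderiv_def Lmat_def)

lemma sum_mult_Fform_along_line:
  fixes v :: "'k::comm_ring_1 pt3"
  assumes A: "\<forall>j<d + 1. poly_fun3 (A j)" and Fv: "\<forall>j\<le>d. Fform d lam j v = 0"
  shows "\<exists>P. (\<forall>e. (\<Sum>j\<le>d. A j (lincomb3 1 v e u) * Fform d lam j (lincomb3 1 v e u)) = poly P e)
    \<and> coeff P (Suc 0) = (\<Sum>j\<le>d. A j v * Fderiv d lam v u j)"
proof -
  have "\<forall>j. \<exists>P. j < d + 1 \<longrightarrow> (\<forall>e. A j (lincomb3 1 v e u) = poly P e)"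
    using A poly_fun3_on_line by blast
  then obtain PA where PA: "\<And>j e. j < d + 1 \<Longrightarrow> A j (lincomb3 1 v e u) = poly (PA j) e"
    by metis
  have "coeff (PA j) 0 = A j v" if "j \<le> d" for j
    using PA[of j 0] that by (simp add: poly_0_coeff_0)
  then have "coeff (\<Sum>j\<le>d. PA j * Fline d lam v u j) (Suc 0) = (\<Sum>j\<le>d. A j v * Fderiv d lam v u j)"
    using Fv by (simp add: coeff_sum coeff_mult_Suc_0 coeff_0_Fline coeff_Suc_0_Fline)
  moreover have "(\<Sum>j\<le>d. A j (lincomb3 1 v e u) * Fform d lam j (lincomb3 1 v e u))
      = poly (\<Sum>j\<le>d. PA j * Fline d lam v u j) e" for e
    by (simp add: poly_sum PA poly_Fline)
  ultimately show ?thesis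
    by blast
qed

text \<open>Differentiate $(z \cdot w)\, h(w) = \sum_j A_j F_j$ along a line through the base point $v$.\<close>

lemma ideal_directional_derivative:
  fixes v :: "'k::field_char_0 pt3"
  assumes ideal: "ideal_generated_by X (d + 1) (Fform d lam)"
    and h: "hom_form3 r h" and van: "\<forall>x\<in>X. dot z x * h x = 0"
    and zv: "dot z v = 0" and Fv: "\<forall>j\<le>d. Fform d lam j v = 0"
  shows "\<exists>A. \<forall>u. dot z u * h v = (\<Sum>j\<le>d. A j * Fderiv d lam v u j)"
proof -
  define G where "G w = dot z w * h w" for w
  have "hom_form3 (1 + r) G"
    unfolding G_def by (rule hom_form3_mult[OF hom_form3_dot h])
  moreover have "\<forall>x\<in>X. G x = 0"
    using van by (simp add: G_def)
  ultimately obtain A where A: "\<forall>j<d + 1. poly_fun3 (A j)"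
    and G: "\<forall>w. G w = (\<Sum>j<d + 1. A j w * Fform d lam j w)"
    using ideal unfolding ideal_generated_by_def by blast
  have "dot z u * h v = (\<Sum>j\<le>d. A j v * Fderiv d lam v u j)" for u
  proof -
    obtain P where P: "\<And>e. (\<Sum>j\<le>d. A j (lincomb3 1 v e u) * Fform d lam j (lincomb3 1 v e u)) = poly P e"
      and P1: "coeff P (Suc 0) = (\<Sum>j\<le>d. A j v * Fderiv d lam v u j)"
      using sum_mult_Fform_along_line[OF A Fv] by blast
    obtain H where H: "\<And>e. h (lincomb3 1 v e u) = poly H e"
      using poly_fun3_on_line[OF hom_form3_poly_fun3[OF h]] by blast
    have "poly P e = poly (smult (dot z u) (pCons 0 H)) e" for e
    proof -
      have "poly P e = G (lincomb3 1 v e u)"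
        by (simp add: G[rule_format] lessThan_Suc_atMost flip: P)
      also have "\<dots> = poly (smult (dot z u) (pCons 0 H)) e"
        by (simp add: G_def dot_lincomb3 zv H)
      finally show ?thesis .
    qed
    then have "P = smult (dot z u) (pCons 0 H)"
      by (simp add: poly_eq_poly_eq_iff[symmetric] fun_eq_iff)
    then show ?thesis
      using P1 H[of 0] by (simp add: poly_0_coeff_0)
  qed
  then show ?thesis
    by (intro exI[of _ "\<lambda>j. A j v"]) blast
qed

lemma base_point_Fderiv_rank_2:
  fixes v :: "'k::field_char_0 pt3"
  assumes X: "proj_point_set X" and ideal: "ideal_generated_by X (d + 1) (Fform d lam)"
    and v: "v \<noteq> (0, 0, 0)" and Fv: "\<forall>j\<le>d. Fform d lam j v = 0"
  shows "\<exists>u1 u2. \<forall>\<beta> \<gamma>. (\<forall>j\<le>d. \<beta> * Fderiv d lam v u1 j + \<gamma> * Fderiv d lam v u2 j = 0)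
     \<longrightarrow> \<beta> = 0 \<and> \<gamma> = 0"
proof -
  obtain z1 z2 u1 u2 where zu: "dot z1 v = 0" "dot z2 v = 0" "dot z1 u1 = 1" "dot z1 u2 = 0"
    "dot z2 u1 = 0" "dot z2 u2 = 1"
    using exists_dual_pair[OF v] by blast
  obtain r h where h: "hom_form3 r h" "h v \<noteq> 0" "\<forall>x\<in>X. \<forall>z. dot z v = 0 \<longrightarrow> dot z x * h x = 0"
    using exists_form_vanishing_on_lines_through[OF X v] by blast
  have "\<forall>x\<in>X. dot z1 x * h x = 0" "\<forall>x\<in>X. dot z2 x * h x = 0"
    using h(3) zu(1,2) by blast+
  then obtain A1 A2 where A1: "\<forall>u. dot z1 u * h v = (\<Sum>j\<le>d. A1 j * Fderiv d lam v u j)"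
    and A2: "\<forall>u. dot z2 u * h v = (\<Sum>j\<le>d. A2 j * Fderiv d lam v u j)"
    using ideal_directional_derivative[OF ideal h(1) _ _ Fv] zu(1,2) by meson
  have "\<beta> = 0 \<and> \<gamma> = 0"
    if rel: "\<forall>j\<le>d. \<beta> * Fderiv d lam v u1 j + \<gamma> * Fderiv d lam v u2 j = 0" for \<beta> \<gamma>
  proof -
    have "Fderiv d lam v (lincomb3 \<beta> u1 \<gamma> u2) j = 0" if "j \<le> d" for j
      using that rel by (simp add: Fderiv_lincomb3)
    then have "dot z1 (lincomb3 \<beta> u1 \<gamma> u2) * h v = 0" "dot z2 (lincomb3 \<beta> u1 \<gamma> u2) * h v = 0"
      by (simp_all add: A1[rule_format] A2[rule_format])
    then show ?thesis
      using h(2) zu by (simp add: dot_lincomb3)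
  qed
  then show ?thesis
    by blast
qed

lemma independent_if_not_in_span:
  fixes b p q :: "nat \<Rightarrow> 'k::field"
  assumes indep: "\<forall>\<beta> \<gamma>. (\<forall>j\<le>d. \<beta> * p j + \<gamma> * q j = 0) \<longrightarrow> \<beta> = 0 \<and> \<gamma> = 0"
    and notin: "\<nexists>\<beta> \<gamma>. \<forall>j\<le>d. b j = \<beta> * p j + \<gamma> * q j"
  shows "\<forall>\<alpha> \<beta> \<gamma>. (\<forall>j\<le>d. \<alpha> * b j + \<beta> * p j + \<gamma> * q j = 0) \<longrightarrow> \<alpha> = 0 \<and> \<beta> = 0 \<and> \<gamma> = 0"
proof (intro allI impI)
  fix \<alpha> \<beta> \<gamma> assume rel: "\<forall>j\<le>d. \<alpha> * b j + \<beta> * p j + \<gamma> * q j = 0"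
  have "\<alpha> = 0"
  proof (rule ccontr)
    assume "\<alpha> \<noteq> 0"
    have "b j = (- \<beta> / \<alpha>) * p j + (- \<gamma> / \<alpha>) * q j" if "j \<le> d" for j
    proof -
      have "b j = (\<alpha> * b j) / \<alpha>"
        using \<open>\<alpha> \<noteq> 0\<close> by simp
      also have "\<alpha> * b j = - (\<beta> * p j + \<gamma> * q j)"
        using rel that by (simp add: add_eq_0_iff2 add.assoc)
      finally show ?thesis
        using \<open>\<alpha> \<noteq> 0\<close> by (simp add: field_simps)
    qed
    then show False
      using notin by blast
  qed
  moreover have "\<forall>j\<le>d. \<beta> * p j + \<gamma> * q j = 0"
    using rel \<open>\<alpha> = 0\<close> by simp
  ultimately show "\<alpha> = 0 \<and> \<beta> = 0 \<and> \<gamma> = 0"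
    using indep by blast
qed

lemma base_point_kernel_eq_Fderiv:
  fixes v :: "'k::field_char_0 pt3"
  assumes X: "proj_point_set X" and ideal: "ideal_generated_by X (d + 1) (Fform d lam)"
    and v: "v \<noteq> (0, 0, 0)" and Fv: "\<forall>j\<le>d. Fform d lam j v = 0"
    and kb: "\<forall>l<d. (\<Sum>j\<le>d. Lform lam l j v * b j) = 0"
  shows "\<exists>u. \<forall>j\<le>d. Fderiv d lam v u j = b j"
proof -
  obtain u1 u2 where indep: "\<forall>\<beta> \<gamma>. (\<forall>j\<le>d. \<beta> * Fderiv d lam v u1 j + \<gamma> * Fderiv d lam v u2 j = 0)
     \<longrightarrow> \<beta> = 0 \<and> \<gamma> = 0"
    using base_point_Fderiv_rank_2[OF X ideal v Fv] by blast
  let ?p = "Fderiv d lam v u1" and ?q = "Fderiv d lam v u2"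
  have "\<exists>\<beta> \<gamma>. \<forall>j\<le>d. b j = \<beta> * ?p j + \<gamma> * ?q j"
  proof (rule ccontr)
    assume "\<not> ?thesis"
    then have indep3: "\<forall>\<alpha> \<beta> \<gamma>. (\<forall>j\<le>d. \<alpha> * b j + \<beta> * ?p j + \<gamma> * ?q j = 0)
        \<longrightarrow> \<alpha> = 0 \<and> \<beta> = 0 \<and> \<gamma> = 0"
      by (rule independent_if_not_in_span[OF indep])
    have ker: "\<forall>l<d. (\<Sum>j\<le>d. Lmat lam v l j * b j) = 0"
        "\<forall>l<d. (\<Sum>j\<le>d. Lmat lam v l j * ?p j) = 0" "\<forall>l<d. (\<Sum>j\<le>d. Lmat lam v l j * ?q j) = 0"
      using kb sum_Lform_mult_Fderiv_eq_0[OF Fv, of _ u1] sum_Lform_mult_Fderiv_eq_0[OF Fv, of _ u2]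
      by (simp_all add: Lmat_def)
    have "?p j = 0" if "j \<le> d" for j
      using maxminor_deriv_eq_0_if_corank_3[OF ker indep3 that, of "Lmat lam u1"]
      by (simp add: Fderiv_def)
    then show False
      using indep[rule_format, of 1 0] by simp
  qed
  then obtain \<beta> \<gamma> where "\<forall>j\<le>d. b j = \<beta> * Fderiv d lam v u1 j + \<gamma> * Fderiv d lam v u2 j"
    by blast
  then show ?thesis
    by (intro exI[of _ "lincomb3 \<beta> u1 \<gamma> u2"]) (simp add: Fderiv_lincomb3)
qed

subsection \<open>Homogeneous polynomials and projective closure\<close>

lemma finite_expo:
  assumes "finite C"
  shows "finite (expo C s)"
proof -
  have "expo C s \<subseteq> {f. \<forall>x. (x \<in> C \<longrightarrow> f x \<in> {..s}) \<and> (x \<notin> C \<longrightarrow> f x = 0)}"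
  proof
    fix m assume m: "m \<in> expo C s"
    have "m x \<le> s" if "x \<in> C" for x
      using m that assms member_le_sum[of x C m] by (auto simp: expo_def)
    then show "m \<in> {f. \<forall>x. (x \<in> C \<longrightarrow> f x \<in> {..s}) \<and> (x \<notin> C \<longrightarrow> f x = 0)}"
      using m by (auto simp: expo_def)
  qed
  then show ?thesis
    using finite_set_of_finite_funs[OF assms, of "{..s}" 0] finite_subset by blast
qed

lemma hom_poly_lincomb:
  assumes "hom_poly C s f" "hom_poly C s g"
  shows "hom_poly C s (\<lambda>x. a * f x + b * g x)"
proof -
  obtain c where c: "\<And>x. f x = (\<Sum>m\<in>expo C s. c m * (\<Prod>i\<in>C. x i ^ m i))"
    using assms(1) unfolding hom_poly_def by blast
  obtain c' where c': "\<And>x. g x = (\<Sum>m\<in>expo C s. c' m * (\<Prod>i\<in>C. x i ^ m i))"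
    using assms(2) unfolding hom_poly_def by blast
  have "a * f x + b * g x = (\<Sum>m\<in>expo C s. (a * c m + b * c' m) * (\<Prod>i\<in>C. x i ^ m i))" for x
    by (simp add: c c' sum_distrib_left sum.distrib algebra_simps)
  then show ?thesis
    unfolding hom_poly_def by (intro exI[of _ "\<lambda>m. a * c m + b * c' m"]) blast
qed

lemma hom_poly_scale: "hom_poly C s f \<Longrightarrow> hom_poly C s (\<lambda>x. a * f x)"
  using hom_poly_lincomb[of C s f f a 0] by simp

lemma hom_poly_sum:
  assumes "finite I" "\<forall>i\<in>I. hom_poly C s (f i)"
  shows "hom_poly C s (\<lambda>x. \<Sum>i\<in>I. f i x)"
  using assms
proof (induction I rule: finite_induct)
  case empty
  show ?case
    unfolding hom_poly_def by (intro exI[of _ "\<lambda>_. 0"]) simp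
next
  case (insert y F)
  then have "hom_poly C s (\<lambda>x. 1 * f y x + 1 * (\<Sum>i\<in>F. f i x))"
    by (intro hom_poly_lincomb) auto
  then show ?case
    using insert.hyps by simp
qed

lemma hom_poly_monomial:
  assumes "finite C" and m0: "m0 \<in> expo C s"
  shows "hom_poly C s (\<lambda>x. \<Prod>i\<in>C. x i ^ m0 i)"
proof -
  have "(\<Prod>i\<in>C. x i ^ m0 i) = (\<Sum>m\<in>expo C s. (if m = m0 then 1 else 0) * (\<Prod>i\<in>C. x i ^ m i))"
    for x :: "'a \<Rightarrow> 'b"
  proof -
    have "(\<Sum>m\<in>expo C s. (if m = m0 then 1 else 0) * (\<Prod>i\<in>C. x i ^ m i))
        = (\<Sum>m\<in>expo C s. if m = m0 then (\<Prod>i\<in>C. x i ^ m i) else 0)"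
      by (rule sum.cong) auto
    then show ?thesis
      using finite_expo[OF assms(1)] m0 by simp
  qed
  then show ?thesis
    unfolding hom_poly_def by (intro exI[of _ "\<lambda>m. if m = m0 then 1 else 0"]) blast
qed

lemma prod_power_indicator:
  assumes "finite C" "c \<in> C"
  shows "(\<Prod>i\<in>C. x i ^ (if i = c then 1 else 0)) = x c"
proof -
  have "(\<Prod>i\<in>C. x i ^ (if i = c then 1 else 0)) = (\<Prod>i\<in>C. if i = c then x i else 1)"
    by (rule prod.cong) auto
  then show ?thesis
    using assms by simp
qed

lemma hom_poly_var:
  assumes "finite C" "c \<in> C"
  shows "hom_poly C 1 (\<lambda>x. x c)"
proof -
  have "(\<lambda>i. if i = c then 1 else 0) \<in> expo C 1"
    using assms by (simp add: expo_def)
  then have "hom_poly C 1 (\<lambda>x. \<Prod>i\<in>C. x i ^ (if i = c then 1 else 0))"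
    by (rule hom_poly_monomial[OF assms(1)])
  then show ?thesis
    by (simp add: prod_power_indicator[OF assms])
qed

lemma hom_poly_var_mult:
  assumes "finite C" "c1 \<in> C" "c2 \<in> C"
  shows "hom_poly C 2 (\<lambda>x :: 'i \<Rightarrow> 'k::comm_semiring_1. x c1 * x c2)"
proof -
  define m :: "'i \<Rightarrow> nat" where "m i = (if i = c1 then 1 else 0) + (if i = c2 then 1 else 0)" for i
  have "m \<in> expo C 2"
    using assms by (simp add: expo_def m_def sum.distrib)
  then have "hom_poly C 2 (\<lambda>x :: 'i \<Rightarrow> 'k. \<Prod>i\<in>C. x i ^ m i)"
    by (rule hom_poly_monomial[OF assms(1)])
  moreover have prod_m: "(\<Prod>i\<in>C. x i ^ m i) = x c1 * x c2" for x :: "'i \<Rightarrow> 'k"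
    unfolding m_def power_add prod.distrib
    by (simp add: prod_power_indicator[OF assms(1,2)] prod_power_indicator[OF assms(1,3)])
  ultimately show ?thesis
    by (simp add: prod_m)
qed

lemma hom_poly_binomial:
  assumes "finite C" "c1 \<in> C" "c2 \<in> C" "c3 \<in> C" "c4 \<in> C"
  shows "hom_poly C 2 (\<lambda>x :: 'i \<Rightarrow> 'k::comm_ring_1. x c1 * x c2 - x c3 * x c4)"
proof -
  have "hom_poly C 2 (\<lambda>x :: 'i \<Rightarrow> 'k. 1 * (x c1 * x c2) + (- 1) * (x c3 * x c4))"
    by (rule hom_poly_lincomb[OF hom_poly_var_mult[OF assms(1-3)] hom_poly_var_mult[OF assms(1,4,5)]])
  moreover have "(\<lambda>x :: 'i \<Rightarrow> 'k. 1 * (x c1 * x c2) + (- 1) * (x c3 * x c4))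
      = (\<lambda>x. x c1 * x c2 - x c3 * x c4)"
    by (simp add: fun_eq_iff)
  ultimately show ?thesis
    by simp
qed

lemma hom_poly_on_curve:
  fixes P :: "'i \<Rightarrow> 'k::comm_ring_1 poly"
  assumes "hom_poly C s G"
  shows "\<exists>Q. \<forall>\<mu> e y. (\<forall>c\<in>C. y c = \<mu> * poly (P c) e) \<longrightarrow> G y = \<mu> ^ s * poly Q e"
proof -
  obtain cf where cf: "\<And>x. G x = (\<Sum>m\<in>expo C s. cf m * (\<Prod>i\<in>C. x i ^ m i))"
    using assms unfolding hom_poly_def by blast
  define Q where "Q = (\<Sum>m\<in>expo C s. smult (cf m) (\<Prod>i\<in>C. P i ^ m i))"
  have "G y = \<mu> ^ s * poly Q e" if y: "\<forall>c\<in>C. y c = \<mu> * poly (P c) e" for y \<mu> e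
  proof -
    have "(\<Prod>i\<in>C. y i ^ m i) = \<mu> ^ s * (\<Prod>i\<in>C. poly (P i) e ^ m i)" if "m \<in> expo C s" for m
    proof -
      have "(\<Prod>i\<in>C. y i ^ m i) = (\<Prod>i\<in>C. \<mu> ^ m i) * (\<Prod>i\<in>C. poly (P i) e ^ m i)"
        using y by (simp add: power_mult_distrib prod.distrib)
      also have "(\<Prod>i\<in>C. \<mu> ^ m i) = \<mu> ^ s"
        using that power_sum[of \<mu> m C] by (simp add: expo_def)
      finally show ?thesis .
    qed
    then show ?thesis
      by (simp add: cf Q_def poly_sum poly_prod sum_distrib_left algebra_simps)
  qed
  then show ?thesis
    by blast
qed

text \<open>A form vanishing on $S$ vanishes at all but finitely many points of the curve, hence on the
  whole curve and in particular at $e = 0$.\<close>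

lemma proj_closure_curve_limit:
  fixes x :: "nat \<times> nat \<Rightarrow> 'k::field_char_0" and P :: "nat \<times> nat \<Rightarrow> 'k poly"
  assumes x: "x \<in> proj_reps C" and P0: "\<forall>c\<in>C. poly (P c) 0 = x c"
    and curve: "\<forall>e. e \<noteq> 0 \<longrightarrow> (\<exists>c\<in>C. poly (P c) e \<noteq> 0) \<longrightarrow>
        (\<exists>\<mu>. \<mu> \<noteq> 0 \<and> (\<lambda>c. if c \<in> C then \<mu> * poly (P c) e else 0) \<in> S)"
  shows "x \<in> proj_closure C (proj_reps C) S"
proof -
  have "G x = 0" if G: "hom_poly C s G" and van: "\<forall>y\<in>S. G y = 0" for s G
  proof -
    obtain Q where Q: "\<And>\<mu> e y. \<forall>c\<in>C. y c = \<mu> * poly (P c) e \<Longrightarrow> G y = \<mu> ^ s * poly Q e"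
      using hom_poly_on_curve[OF G] by blast
    obtain c0 where c0: "c0 \<in> C" "x c0 \<noteq> 0"
      using x unfolding proj_reps_def by blast
    have "poly Q e = 0" if "e \<notin> insert 0 {e. poly (P c0) e = 0}" for e
    proof -
      have "e \<noteq> 0" "\<exists>c\<in>C. poly (P c) e \<noteq> 0"
        using that c0(1) by auto
      then obtain \<mu> where \<mu>: "\<mu> \<noteq> 0" and "(\<lambda>c. if c \<in> C then \<mu> * poly (P c) e else 0) \<in> S"
        using curve by blast
      then have "G (\<lambda>c. if c \<in> C then \<mu> * poly (P c) e else 0) = 0"
        using van by blast
      moreover have "G (\<lambda>c. if c \<in> C then \<mu> * poly (P c) e else 0) = \<mu> ^ s * poly Q e"
        by (rule Q) simp
      ultimately show ?thesis
        using \<mu> by simp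
    qed
    then have "UNIV - insert 0 {e. poly (P c0) e = 0} \<subseteq> {e. poly Q e = 0}"
      by blast
    moreover have "finite {e. poly (P c0) e = 0}"
      using P0 c0 by (intro poly_roots_finite) auto
    then have "infinite (UNIV - insert 0 {e. poly (P c0) e = 0} :: 'k set)"
      using infinite_UNIV_char_0 by (simp add: Diff_infinite_finite)
    ultimately have "infinite {e. poly Q e = 0}"
      using finite_subset by blast
    then have "Q = 0"
      using poly_roots_finite by blast
    then show ?thesis
      using Q[of x 1 0] P0 by simp
  qed
  then show ?thesis
    using x unfolding proj_closure_def by blast
qed

subsection \<open>Segre--Veronese points\<close>

abbreviation phi_closure :: "nat \<Rightarrow> nat \<Rightarrow> (nat \<Rightarrow> 'k pt3 \<Rightarrow> 'k) \<Rightarrow> (nat \<times> nat \<Rightarrow> 'k::comm_semiring_1) set"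
  where "phi_closure n d F \<equiv>
    proj_closure (cidx (length (mons n)) d) (proj_reps (cidx (length (mons n)) d)) (phi_image n d F)"

definition segre_veronese :: "nat \<Rightarrow> nat \<Rightarrow> 'k::comm_semiring_1 pt3 \<Rightarrow> (nat \<Rightarrow> 'k) \<Rightarrow> nat \<times> nat \<Rightarrow> 'k" where
  "segre_veronese n d v b =
     (\<lambda>(i, j). if i < length (mons n) \<and> j \<le> d then mon3 (mons n ! i) v * b j else 0)"

lemma phi_eq_segre_veronese: "phi n d F w = segre_veronese n d w (\<lambda>j. F j w)"
  by (simp add: phi_def segre_veronese_def)

lemma segre_veronese_cong:
  "(\<And>j. j \<le> d \<Longrightarrow> b j = b' j) \<Longrightarrow> segre_veronese n d v b = segre_veronese n d v b'"
  by (auto simp: segre_veronese_def fun_eq_iff)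

lemma segre_veronese_minor:
  fixes n d :: nat and v :: "'k::comm_ring_1 pt3" and b :: "nat \<Rightarrow> 'k"
  defines "y \<equiv> segre_veronese n d v b"
  shows "y (i1, j1) * y (i2, j2) - y (i1, j2) * y (i2, j1) = 0"
  by (simp add: y_def segre_veronese_def)

lemma segre_veronese_catalecticant:
  fixes n d :: nat and v :: "'k::comm_ring_1 pt3" and b :: "nat \<Rightarrow> 'k"
  assumes n: "n \<ge> 1" and b: "b1 \<in> mons_set (n - 1)" "b2 \<in> mons_set (n - 1)"
  defines "y \<equiv> segre_veronese n d v b"
  shows "y (midx n (madd b1 (ek k1)), j) * y (midx n (madd b2 (ek k2)), j)
    - y (midx n (madd b2 (ek k1)), j) * y (midx n (madd b1 (ek k2)), j) = 0"
proof -
  have "y (midx n (madd \<beta> (ek k)), j) = (if j \<le> d then mon3 \<beta> v * coord v k * b j else 0)"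
    if "\<beta> \<in> mons_set (n - 1)" for \<beta> k
    using midx_less_length nth_mons_midx madd_ek_in_mons_set[OF that n]
    by (simp add: y_def segre_veronese_def mon3_madd mon3_ek)
  then show ?thesis
    using b by (simp add: algebra_simps)
qed

lemma sum_Ementry:
  fixes g :: "mexp \<Rightarrow> 'k::comm_ring_1"
  assumes b: "\<beta> \<in> mons_set (n - 1)" and n: "n \<ge> 1"
  shows "(\<Sum>\<alpha>\<in>mons_set n. Ementry lam (\<beta>, l) (\<alpha>, j) * g \<alpha>) = (\<Sum>k<3. lam l j k * g (madd \<beta> (ek k)))"
proof -
  define T where "T = (\<lambda>k. madd \<beta> (ek k)) ` {..<3}"
  have T: "T \<subseteq> mons_set n"
    using madd_ek_in_mons_set[OF b n] by (auto simp: T_def)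
  have "(\<Sum>\<alpha>\<in>mons_set n. Ementry lam (\<beta>, l) (\<alpha>, j) * g \<alpha>) = (\<Sum>\<alpha>\<in>T. Ementry lam (\<beta>, l) (\<alpha>, j) * g \<alpha>)"
    by (rule sum.mono_neutral_right[OF finite_mons_set T]) (auto simp: T_def Ementry_def)
  also have "\<dots> = (\<Sum>k<3. Ementry lam (\<beta>, l) (madd \<beta> (ek k), j) * g (madd \<beta> (ek k)))"
    unfolding T_def by (subst sum.reindex) (auto simp: inj_on_def madd_ek_cancel)
  also have "\<dots> = (\<Sum>k<3. lam l j k * g (madd \<beta> (ek k)))"
  proof (rule sum.cong[OF refl])
    fix k :: nat assume k: "k \<in> {..<3}"
    have "(THE k'. k' < 3 \<and> madd \<beta> (ek k) = madd \<beta> (ek k')) = k"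
      using k madd_ek_cancel[of k _ \<beta>] by (intro the_equality) auto
    then show "Ementry lam (\<beta>, l) (madd \<beta> (ek k), j) * g (madd \<beta> (ek k)) = lam l j k * g (madd \<beta> (ek k))"
      using k by (auto simp: Ementry_def)
  qed
  finally show ?thesis .
qed

lemma Ementry_row_segre_veronese:
  fixes w :: "'k::comm_ring_1 pt3"
  assumes b: "\<beta> \<in> mons_set (n - 1)" and n: "n \<ge> 1"
  shows "(\<Sum>i<length (mons n). \<Sum>j\<le>d. Ementry lam (\<beta>, l) (mons n ! i, j) * segre_veronese n d w B (i, j))
     = mon3 \<beta> w * (\<Sum>j\<le>d. Lform lam l j w * B j)"
proof -
  have "(\<Sum>i<length (mons n). \<Sum>j\<le>d. Ementry lam (\<beta>, l) (mons n ! i, j) * segre_veronese n d w B (i, j))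
     = (\<Sum>\<alpha>\<in>mons_set n. \<Sum>j\<le>d. Ementry lam (\<beta>, l) (\<alpha>, j) * (mon3 \<alpha> w * B j))"
    by (simp add: segre_veronese_def sum_mons[symmetric])
  also have "\<dots> = (\<Sum>j\<le>d. B j * (\<Sum>\<alpha>\<in>mons_set n. Ementry lam (\<beta>, l) (\<alpha>, j) * mon3 \<alpha> w))"
    by (subst sum.swap) (simp add: sum_distrib_left algebra_simps)
  also have "\<dots> = (\<Sum>j\<le>d. B j * (\<Sum>k<3. lam l j k * mon3 (madd \<beta> (ek k)) w))"
    by (simp add: sum_Ementry[OF b n])
  also have "\<dots> = mon3 \<beta> w * (\<Sum>j\<le>d. Lform lam l j w * B j)"
    by (simp add: mon3_madd mon3_ek Lform_def sum_distrib_left algebra_simps)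
  finally show ?thesis .
qed

subsection \<open>The variety $V$ and the closure of the image\<close>

lemma phi_closure_subset_Vset:
  fixes lam :: "nat \<Rightarrow> nat \<Rightarrow> nat \<Rightarrow> 'k::comm_ring_1"
  assumes n: "n \<ge> 1"
  shows "phi_closure n d (Fform d lam) \<subseteq> Vset n d lam"
proof
  let ?U = "length (mons n)"
  let ?C = "cidx ?U d"
  fix x assume x: "x \<in> phi_closure n d (Fform d lam)"
  have vanish: "G x = 0"
    if G: "hom_poly ?C s G" and van: "\<And>w. G (phi n d (Fform d lam) w) = 0" for s G
  proof -
    have "\<forall>y\<in>phi_image n d (Fform d lam). G y = 0"
      using van unfolding phi_image_def by blast
    then show ?thesis
      using x G unfolding proj_closure_def by blast
  qed
  have fin: "finite ?C" and inC: "\<And>i j. (i, j) \<in> ?C \<longleftrightarrow> i < ?U \<and> j \<le> d"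
    by (simp_all add: cidx_def)
  have "(\<Sum>i<?U. \<Sum>j\<le>d. Ementry lam (\<beta>, l) (mons n ! i, j) * x (i, j)) = 0"
    if "\<beta> \<in> mons_set (n - 1)" "l < d" for \<beta> l
  proof (rule vanish)
    show "hom_poly ?C 1 (\<lambda>x. \<Sum>i<?U. \<Sum>j\<le>d. Ementry lam (\<beta>, l) (mons n ! i, j) * x (i, j))"
      by (intro hom_poly_sum ballI hom_poly_scale hom_poly_var fin) (auto simp: inC)
  qed (simp add: phi_eq_segre_veronese Ementry_row_segre_veronese[OF that(1) n]
      sum_Lform_mult_Fform_eq_0[OF that(2)])
  moreover have "x (i1, j1) * x (i2, j2) - x (i1, j2) * x (i2, j1) = 0"
    if "i1 < ?U" "i2 < ?U" "j1 \<le> d" "j2 \<le> d" for i1 i2 j1 j2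
    using that
    by (intro vanish[of 2 "\<lambda>y. y (i1, j1) * y (i2, j2) - y (i1, j2) * y (i2, j1)"]
        hom_poly_binomial fin) (simp_all add: inC phi_eq_segre_veronese segre_veronese_minor)
  moreover have "x (midx n (madd b1 (ek k1)), j) * x (midx n (madd b2 (ek k2)), j)
      - x (midx n (madd b2 (ek k1)), j) * x (midx n (madd b1 (ek k2)), j) = 0"
    if "j \<le> d" "b1 \<in> mons_set (n - 1)" "b2 \<in> mons_set (n - 1)" for j k1 k2 b1 b2
    using that
    by (intro vanish[of 2 "\<lambda>y. y (midx n (madd b1 (ek k1)), j) * y (midx n (madd b2 (ek k2)), j)
        - y (midx n (madd b2 (ek k1)), j) * y (midx n (madd b1 (ek k2)), j)"] hom_poly_binomial fin)
      (simp_all add: inC midx_less_length madd_ek_in_mons_set[OF _ n] phi_eq_segre_veronese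
        segre_veronese_catalecticant[OF n])
  moreover have "x \<in> proj_reps ?C"
    using x by (simp add: proj_closure_def)
  ultimately show "x \<in> Vset n d lam"
    unfolding Vset_def by blast
qed

lemma Vset_eq_segre_veronese:
  fixes lam :: "nat \<Rightarrow> nat \<Rightarrow> nat \<Rightarrow> 'k::field"
  assumes n: "n \<ge> 1" and x: "x \<in> Vset n d lam"
  shows "\<exists>v b. v \<noteq> (0, 0, 0) \<and> x = segre_veronese n d v b"
proof -
  let ?U = "length (mons n)"
  have xr: "x \<in> proj_reps (cidx ?U d)"
    and minors: "\<forall>i1<?U. \<forall>i2<?U. \<forall>j1\<le>d. \<forall>j2\<le>d. x (i1, j1) * x (i2, j2) - x (i1, j2) * x (i2, j1) = 0"
    and cat: "\<forall>j\<le>d. \<forall>k1<3. \<forall>k2<3. \<forall>b1\<in>mons_set (n - 1). \<forall>b2\<in>mons_set (n - 1).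
        x (midx n (madd b1 (ek k1)), j) * x (midx n (madd b2 (ek k2)), j)
        - x (midx n (madd b2 (ek k1)), j) * x (midx n (madd b1 (ek k2)), j) = 0"
    using x unfolding Vset_def by blast+
  obtain i0 j0 where ij0: "i0 < ?U" "j0 \<le> d" "x (i0, j0) \<noteq> 0"
    using xr by (auto simp: proj_reps_def cidx_def)
  have cat0: "\<forall>k1<3. \<forall>k2<3. \<forall>b1\<in>mons_set (n - 1). \<forall>b2\<in>mons_set (n - 1).
      x (midx n (madd b1 (ek k1)), j0) * x (midx n (madd b2 (ek k2)), j0)
      - x (midx n (madd b2 (ek k1)), j0) * x (midx n (madd b1 (ek k2)), j0) = 0"
    using cat ij0(2) by blast
  have "x (midx n (mons n ! i0), j0) \<noteq> 0"
    using ij0 by (simp add: midx_nth_mons)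
  then obtain v c where v: "v \<noteq> (0, 0, 0)" and col: "\<forall>g\<in>mons_set n. x (midx n g, j0) = c * mon3 g v"
    using veronese_if_catalecticant_minors[where a = "\<lambda>g. x (midx n g, j0)", OF n cat0
        nth_mons_in_mons_set[OF ij0(1)]] by blast
  define b where "b j = c * x (i0, j) / x (i0, j0)" for j
  have "x (i, j) = segre_veronese n d v b (i, j)" for i j
  proof (cases "i < ?U \<and> j \<le> d")
    case True
    then have "x (i, j) * x (i0, j0) - x (i, j0) * x (i0, j) = 0"
      using minors ij0(1,2) by blast
    moreover have "x (i, j0) = c * mon3 (mons n ! i) v"
      using col[rule_format, OF nth_mons_in_mons_set[of i n]] midx_nth_mons[of i n] True by simp
    ultimately show ?thesis
      using True ij0(3) by (simp add: segre_veronese_def b_def field_simps)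
  next
    case False
    then show ?thesis
      using xr by (auto simp: proj_reps_def cidx_def segre_veronese_def)
  qed
  then have "x = segre_veronese n d v b"
    by (intro ext) (metis surj_pair)
  then show ?thesis
    using v by blast
qed

lemma kernel_if_segre_veronese_in_Vset:
  fixes v :: "'k::field pt3"
  assumes n: "n \<ge> 1" and v: "v \<noteq> (0, 0, 0)" and x: "segre_veronese n d v b \<in> Vset n d lam"
  shows "\<forall>l<d. (\<Sum>j\<le>d. Lform lam l j v * b j) = 0"
proof (intro allI impI)
  fix l assume l: "l < d"
  obtain k where k: "k < 3" "coord v k \<noteq> 0"
  proof -
    have "coord v 0 \<noteq> 0 \<or> coord v 1 \<noteq> 0 \<or> coord v 2 \<noteq> 0"
      using v by (cases v) (auto simp: coord_def)
    then show ?thesis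
      using that[of 0] that[of 1] that[of 2] by auto
  qed
  have lin: "\<forall>\<beta>\<in>mons_set (n - 1). \<forall>l<d. (\<Sum>i<length (mons n). \<Sum>j\<le>d.
      Ementry lam (\<beta>, l) (mons n ! i, j) * segre_veronese n d v b (i, j)) = 0"
    using x unfolding Vset_def by blast
  have "mon3 (ek_pow (n - 1) k) v * (\<Sum>j\<le>d. Lform lam l j v * b j) = 0"
    using lin ek_pow_in_mons_set l by (simp add: Ementry_row_segre_veronese[OF _ n])
  moreover have "mon3 (ek_pow (n - 1) k) v \<noteq> 0"
    using k by (simp add: mon3_ek_pow)
  ultimately show "(\<Sum>j\<le>d. Lform lam l j v * b j) = 0"
    by simp
qed

lemma mon3_zero_point: "mdeg a \<ge> 1 \<Longrightarrow> mon3 a (0, 0, 0) = (0::'k::comm_semiring_1)"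
  by (cases a) (auto simp: mon3_def mdeg_def power_0_left)

lemma phi_mem_phi_image:
  assumes "n \<ge> 1" "phi n d F w \<noteq> (\<lambda>_. 0)"
  shows "phi n d F w \<in> phi_image n d F"
proof -
  have "w \<noteq> (0, 0, 0)"
  proof
    assume "w = (0, 0, 0)"
    then have "phi n d F w = (\<lambda>_. 0)"
      using assms(1) nth_mons_in_mons_set
      by (auto simp: fun_eq_iff phi_def mons_set_def mon3_zero_point)
    then show False
      using assms(2) by simp
  qed
  then show ?thesis
    using assms(2) unfolding phi_image_def by blast
qed

lemma segre_veronese_curve_in_phi_closure:
  fixes Q :: "nat \<Rightarrow> 'k::field_char_0 poly"
  assumes n: "n \<ge> 1"
    and x: "segre_veronese n d v (\<lambda>j. poly (Q j) 0) \<in> proj_reps (cidx (length (mons n)) d)"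
    and F: "\<And>e. e \<noteq> 0 \<Longrightarrow> \<exists>\<mu>. \<mu> \<noteq> 0 \<and> (\<forall>j\<le>d. F j (lincomb3 1 v e u) = \<mu> * poly (Q j) e)"
  shows "segre_veronese n d v (\<lambda>j. poly (Q j) 0) \<in> phi_closure n d F"
proof -
  let ?C = "cidx (length (mons n)) d"
  define P where "P c = mon_line (mons n ! fst c) v u * Q (snd c)" for c
  have P: "poly (P c) e = segre_veronese n d (lincomb3 1 v e u) (\<lambda>j. poly (Q j) e) c"
    if "c \<in> ?C" for c e
    using that by (auto simp: P_def poly_mon_line segre_veronese_def cidx_def)
  show ?thesis
  proof (rule proj_closure_curve_limit[OF x])
    show "\<forall>c\<in>?C. poly (P c) 0 = segre_veronese n d v (\<lambda>j. poly (Q j) 0) c"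
      using P[where e = 0] by simp
    show "\<forall>e. e \<noteq> 0 \<longrightarrow> (\<exists>c\<in>?C. poly (P c) e \<noteq> 0) \<longrightarrow>
        (\<exists>\<mu>. \<mu> \<noteq> 0 \<and> (\<lambda>c. if c \<in> ?C then \<mu> * poly (P c) e else 0) \<in> phi_image n d F)"
    proof (intro allI impI)
      fix e :: 'k assume e: "e \<noteq> 0" and nz: "\<exists>c\<in>?C. poly (P c) e \<noteq> 0"
      obtain \<mu> where \<mu>: "\<mu> \<noteq> 0" "\<forall>j\<le>d. F j (lincomb3 1 v e u) = \<mu> * poly (Q j) e"
        using F[OF e] by blast
      have eq: "(\<lambda>c. if c \<in> ?C then \<mu> * poly (P c) e else 0) = phi n d F (lincomb3 1 v e u)"
        using \<mu>(2) by (auto simp: fun_eq_iff P phi_def segre_veronese_def cidx_def)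
      obtain c where c: "c \<in> ?C" "poly (P c) e \<noteq> 0"
        using nz by blast
      then have "phi n d F (lincomb3 1 v e u) c = \<mu> * poly (P c) e"
        using fun_cong[OF eq, of c] by simp
      then have "phi n d F (lincomb3 1 v e u) c \<noteq> 0"
        using c(2) \<mu>(1) by simp
      then have "phi n d F (lincomb3 1 v e u) \<noteq> (\<lambda>_. 0)"
        by auto
      then have "phi n d F (lincomb3 1 v e u) \<in> phi_image n d F"
        by (rule phi_mem_phi_image[OF n])
      then show "\<exists>\<mu>. \<mu> \<noteq> 0 \<and> (\<lambda>c. if c \<in> ?C then \<mu> * poly (P c) e else 0) \<in> phi_image n d F"
        using eq \<mu>(1) by (intro exI[of _ \<mu>]) simp
    qed
  qed
qed

lemma segre_veronese_in_phi_closure_off_base_points: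
  fixes lam :: "nat \<Rightarrow> nat \<Rightarrow> nat \<Rightarrow> 'k::field_char_0"
  assumes n: "n \<ge> 1" and x: "segre_veronese n d v b \<in> proj_reps (cidx (length (mons n)) d)"
    and kb: "\<forall>l<d. (\<Sum>j\<le>d. Lform lam l j v * b j) = 0"
    and j1: "j1 \<le> d" "Fform d lam j1 v \<noteq> 0"
  shows "segre_veronese n d v b \<in> phi_closure n d (Fform d lam)"
proof -
  define \<kappa> where "\<kappa> = b j1 / Fform d lam j1 v"
  have "\<forall>l<d. (\<Sum>c\<le>d. Lmat lam v l c * b c) = 0"
    using kb by (simp add: Lmat_def)
  moreover have "maxminor d (Lmat lam v) j1 \<noteq> 0"
    using j1(2) by (simp add: Fform_eq_maxminor)
  ultimately have "\<forall>j\<le>d. b j = \<kappa> * maxminor d (Lmat lam v) j"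
    using kernel_eq_smult_maxminor j1(1) by (simp add: \<kappa>_def Fform_eq_maxminor)
  then have bF: "b j = \<kappa> * Fform d lam j v" if "j \<le> d" for j
    using that by (simp add: Fform_eq_maxminor)
  have "\<kappa> \<noteq> 0"
  proof
    assume "\<kappa> = 0"
    then have "segre_veronese n d v b = segre_veronese n d v (\<lambda>_. 0)"
      using bF by (intro segre_veronese_cong) simp
    also have "\<dots> = (\<lambda>_. 0)"
      by (rule ext) (simp add: segre_veronese_def split: prod.splits)
    finally show False
      using x by (simp add: proj_reps_def)
  qed
  then have "\<exists>\<mu>. \<mu> \<noteq> 0 \<and> (\<forall>j\<le>d. Fform d lam j (lincomb3 1 v e (0, 0, 0)) = \<mu> * poly [:b j:] e)"
    for e
    using bF by (intro exI[of _ "1 / \<kappa>"]) (simp add: lincomb3_0_point)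
  from segre_veronese_curve_in_phi_closure[OF n _ this] show ?thesis
    using x by simp
qed

lemma segre_veronese_in_phi_closure_at_base_point:
  fixes lam :: "nat \<Rightarrow> nat \<Rightarrow> nat \<Rightarrow> 'k::field_char_0"
  assumes n: "n \<ge> 1" and X: "proj_point_set X" and ideal: "ideal_generated_by X (d + 1) (Fform d lam)"
    and v: "v \<noteq> (0, 0, 0)" and x: "segre_veronese n d v b \<in> proj_reps (cidx (length (mons n)) d)"
    and kb: "\<forall>l<d. (\<Sum>j\<le>d. Lform lam l j v * b j) = 0"
    and Fv: "\<forall>j\<le>d. Fform d lam j v = 0"
  shows "segre_veronese n d v b \<in> phi_closure n d (Fform d lam)"
proof -
  obtain u where u: "\<forall>j\<le>d. Fderiv d lam v u j = b j"
    using base_point_kernel_eq_Fderiv[OF X ideal v Fv kb] by blast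
  define Q where "Q j = synthetic_div (Fline d lam v u j) 0" for j
  have Fline: "Fline d lam v u j = pCons 0 (Q j)" if "j \<le> d" for j
    using synthetic_div_correct'[of 0 "Fline d lam v u j"] Fv that
    by (simp add: Q_def poly_0_coeff_0 coeff_0_Fline)
  have "poly (Q j) 0 = b j" if "j \<le> d" for j
    using coeff_Suc_0_Fline[of d lam v u j] Fline[OF that] u that by (simp add: poly_0_coeff_0)
  then have x_eq: "segre_veronese n d v b = segre_veronese n d v (\<lambda>j. poly (Q j) 0)"
    by (intro segre_veronese_cong) simp
  have "\<exists>\<mu>. \<mu> \<noteq> 0 \<and> (\<forall>j\<le>d. Fform d lam j (lincomb3 1 v e u) = \<mu> * poly (Q j) e)"
    if "e \<noteq> 0" for e
    using that Fline by (intro exI[of _ e]) (simp flip: poly_Fline)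
  from segre_veronese_curve_in_phi_closure[OF n _ this] show ?thesis
    using x unfolding x_eq by blast
qed

lemma Vset_subset_phi_closure:
  fixes lam :: "nat \<Rightarrow> nat \<Rightarrow> nat \<Rightarrow> 'k::field_char_0"
  assumes n: "n \<ge> 1" and X: "proj_point_set X" and ideal: "ideal_generated_by X (d + 1) (Fform d lam)"
  shows "Vset n d lam \<subseteq> phi_closure n d (Fform d lam)"
proof
  fix x assume x: "x \<in> Vset n d lam"
  then obtain v b where v: "v \<noteq> (0, 0, 0)" and xb: "x = segre_veronese n d v b"
    using Vset_eq_segre_veronese[OF n] by blast
  have kb: "\<forall>l<d. (\<Sum>j\<le>d. Lform lam l j v * b j) = 0"
    using x unfolding xb by (rule kernel_if_segre_veronese_in_Vset[OF n v])
  have xr: "segre_veronese n d v b \<in> proj_reps (cidx (length (mons n)) d)"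
    using x unfolding xb Vset_def by blast
  show "x \<in> phi_closure n d (Fform d lam)"
  proof (cases "\<forall>j\<le>d. Fform d lam j v = 0")
    case True
    then show ?thesis
      unfolding xb by (rule segre_veronese_in_phi_closure_at_base_point[OF n X ideal v xr kb])
  next
    case False
    then show ?thesis
      unfolding xb using segre_veronese_in_phi_closure_off_base_points[OF n xr kb] by blast
  qed
qed

theorem theorem2p4:
  fixes d n t u p :: nat and X :: "'k::field_char_0 pt3 set"
    and lam :: "nat \<Rightarrow> nat \<Rightarrow> nat \<Rightarrow> 'k"
  assumes "alg_closed TYPE('k)"
    and "d \<ge> 1" and "n \<ge> 1"
    and "t = d + n" and "u = (n + 2) choose 2" and "p = u * (d + 1) - 1"
    and "proj_point_set X" and "card X = (d + 1) choose 2"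
    and "generic_position X"
    and "ideal_generated_by X (d + 1) (Fform d lam)"
  shows "Vset n d lam =
    proj_closure (cidx u d) (proj_reps (cidx u d)) (phi_image n d (Fform d lam))"
proof -
  have "u = length (mons n)"
    using assms(5) length_mons by simp
  then show ?thesis
    using Vset_subset_phi_closure[OF assms(3,7,10)]
      phi_closure_subset_Vset[OF assms(3)] by blast
qed

end
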